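(* Let $x_2,\dots,x_{r-1}\in\{0,1\}$ and let $\underline{n}\in S$ be a maximal point of kind $x_2,\dots,x_{r-1}$. Put $x=\sum_{j=2}^{r-1}x_j$. Then for $1\le h\le r$, \[ d^h(\underline{n})=\begin{cases} h, & 1\le h\le x+1,\\ x+1, & x+1\le h\le r.\end{cases} \]
   Context: Setting: $\mathcal{O}$ a one-dimensional Cohen–Macaulay local ring with coefficient field $\mathbb{F}_q$ ($q\ge r$), integral closure $\overline{\mathcal{O}}$ finite over $\mathcal{O}$ with $\overline{\mathcal{O}}=V_1\cap\dots\cap V_r$ for valuation rings with valuations $v_i$ and maximal ideals $\mathfrak{m}_i$ of $\overline{\mathcal{O}}$ of residue degree $1$; $\mathfrak{m}^{\underline{n}}=\mathfrak{m}_1^{n_1}\cdots\mathfrak{m}_r^{n_r}$; $\ell(\underline{n})=\dim_{\mathbb{F}_q}(\mathcal{O}/(\mathcal{O}\cap\mathfrak{m}^{\underline{n}}))$; $S=\{(v_1(z),\dots,v_r(z)): z\in\mathcal{O}\setminus\{0\}\}\subseteq\mathbb{Z}_+^r$ the value semigroup. Let $I=\{1,\dots,r\}$. For $\underline{n}\in\mathbb{Z}_+^r$ and $J\subsetneq I$ nonempty, $\Delta_J(\underline{n})=\{\underline{\beta}\in S:\beta_i=n_i\ \forall i\in J,\ \beta_t>n_t\ \forall t\notin J\}$; write $\Delta_i=\Delta_{\{i\}}$. A maximal point of $S$ is $\underline{n}\in S$ with $\Delta_i(\underline{n})=\emptyset$ for all $i\in I$. Given $x_2,\dots,x_{r-1}\in\{0,1\}$,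 a maximal point $\underline{n}$ is of kind $x_2,\dots,x_{r-1}$ if for each $j\in\{2,\dots,r-1\}$: $x_j=0$ and $\Delta_J(\underline{n})=\emptyset$ for all $J\subsetneq I$ with $\sharp J=j$, or $x_j=1$ and $\Delta_J(\underline{n})\neq\emptyset$ for all $J\subsetneq I$ with $\sharp J=j$. For $1\le h\le r$ let $e_{1,\dots,h}=(1,\dots,1,0,\dots,0)$ ($h$ ones) and $d^h(\underline{n})=\ell(\underline{n}+e_{1,\dots,h})-\ell(\underline{n})$. *)

theory Defs
  imports Main "HOL-Library.Extended_Real"
begin

text \<open>Ambient ring: the type 'a (a commutative ring) plays the role of the total ring
of fractions K of the local ring R0, which is a subset of 'a.\<close>

definition subring :: "'a::comm_ring_1 set \<Rightarrow> bool" where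
  "subring R \<longleftrightarrow> 0 \<in> R \<and> 1 \<in> R \<and> (\<forall>a\<in>R. \<forall>b\<in>R. a + b \<in> R \<and> a * b \<in> R \<and> - a \<in> R)"

definition subfield :: "'a::comm_ring_1 set \<Rightarrow> bool" where
  "subfield F \<longleftrightarrow> subring F \<and> (0::'a) \<noteq> 1 \<and> (\<forall>a\<in>F. a \<noteq> 0 \<longrightarrow> (\<exists>b\<in>F. a * b = 1))"

definition ideal_in :: "'a::comm_ring_1 set \<Rightarrow> 'a set \<Rightarrow> bool" where
  "ideal_in R A \<longleftrightarrow> A \<subseteq> R \<and> 0 \<in> A \<and> (\<forall>a\<in>A. \<forall>b\<in>A. a + b \<in> A)
     \<and> (\<forall>a\<in>A. \<forall>s\<in>R. s * a \<in> A)"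

definition ideal_gen :: "'a::comm_ring_1 set \<Rightarrow> 'a set \<Rightarrow> 'a set" where
  "ideal_gen R G = \<Inter> {C. ideal_in R C \<and> G \<subseteq> C}"

definition noetherian :: "'a::comm_ring_1 set \<Rightarrow> bool" where
  "noetherian R \<longleftrightarrow> (\<forall>A. ideal_in R A \<longrightarrow> (\<exists>G. finite G \<and> G \<subseteq> A \<and> A = ideal_gen R G))"

definition units_in :: "'a::comm_ring_1 set \<Rightarrow> 'a set" where
  "units_in R = {z\<in>R. \<exists>w\<in>R. z * w = 1}"

text \<open>The set of non-units of R; R is local iff this is an ideal (the maximal ideal).\<close>
definition max_ideal :: "'a::comm_ring_1 set \<Rightarrow> 'a set" where
  "max_ideal R = R - units_in R"

definition local_ring :: "'a::comm_ring_1 set \<Rightarrow> bool" where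
  "local_ring R \<longleftrightarrow> subring R \<and> (0::'a) \<noteq> 1 \<and> ideal_in R (max_ideal R)"

definition prime_in :: "'a::comm_ring_1 set \<Rightarrow> 'a set \<Rightarrow> bool" where
  "prime_in R P \<longleftrightarrow> ideal_in R P \<and> P \<noteq> R \<and> (\<forall>a\<in>R. \<forall>b\<in>R. a * b \<in> P \<longrightarrow> a \<in> P \<or> b \<in> P)"

definition krull_dim_one :: "'a::comm_ring_1 set \<Rightarrow> bool" where
  "krull_dim_one R \<longleftrightarrow> (\<exists>P Q. prime_in R P \<and> prime_in R Q \<and> P \<subset> Q)
     \<and> \<not> (\<exists>P Q T. prime_in R P \<and> prime_in R Q \<and> prime_in R T \<and> P \<subset> Q \<and> Q \<subset> T)"

definition nonzerodivisor_in :: "'a::comm_ring_1 set \<Rightarrow> 'a \<Rightarrow> bool" where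
  "nonzerodivisor_in R z \<longleftrightarrow> z \<in> R \<and> (\<forall>y\<in>R. z * y = 0 \<longrightarrow> y = 0)"

text \<open>A one-dimensional (Noetherian) local ring is Cohen--Macaulay iff its depth is
\<open>\<ge> 1\<close>, i.e. iff its maximal ideal contains a regular element (nonzerodivisor).\<close>
definition one_dim_CM_local :: "'a::comm_ring_1 set \<Rightarrow> bool" where
  "one_dim_CM_local R \<longleftrightarrow> local_ring R \<and> noetherian R \<and> krull_dim_one R
     \<and> (\<exists>z\<in>max_ideal R. nonzerodivisor_in R z)"

definition total_ring_of_fractions :: "'a::comm_ring_1 set \<Rightarrow> bool" where
  "total_ring_of_fractions R \<longleftrightarrow>
     (\<forall>z. nonzerodivisor_in R z \<longrightarrow> (\<exists>w. z * w = 1))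
     \<and> (\<forall>k::'a. \<exists>a\<in>R. \<exists>b. nonzerodivisor_in R b \<and> k * b = a)"

text \<open>F is a coefficient field of the local ring R: a subfield of R mapping
isomorphically onto the residue field R/m.\<close>
definition coefficient_field :: "'a::comm_ring_1 set \<Rightarrow> 'a set \<Rightarrow> bool" where
  "coefficient_field R F \<longleftrightarrow> subfield F \<and> F \<subseteq> R
     \<and> (\<forall>z\<in>R. \<exists>c\<in>F. z - c \<in> max_ideal R)"

definition integral_over :: "'a::comm_ring_1 set \<Rightarrow> 'a \<Rightarrow> bool" where
  "integral_over R z \<longleftrightarrow> (\<exists>(d::nat) c. (\<forall>i<d. c i \<in> R) \<and> z ^ d + (\<Sum>i<d. c i * z ^ i) = 0)"

definition int_closure :: "'a::comm_ring_1 set \<Rightarrow> 'a set" where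
  "int_closure R = {z. integral_over R z}"

definition finite_over :: "'a::comm_ring_1 set \<Rightarrow> 'a set \<Rightarrow> bool" where
  "finite_over R B \<longleftrightarrow> (\<exists>G. finite G \<and> G \<subseteq> B \<and>
      (\<forall>z\<in>B. \<exists>a. (\<forall>g\<in>G. a g \<in> R) \<and> z = (\<Sum>g\<in>G. a g * g)))"

definition discrete_valuation :: "('a::comm_ring_1 \<Rightarrow> ereal) \<Rightarrow> bool" where
  "discrete_valuation w \<longleftrightarrow> w 0 = \<infinity> \<and> w 1 = 0
     \<and> (\<forall>x y. w (x * y) = w x + w y)
     \<and> (\<forall>x y. min (w x) (w y) \<le> w (x + y))
     \<and> (\<forall>x. w x = \<infinity> \<or> (\<exists>k::int. w x = ereal (real_of_int k)))
     \<and> (\<exists>x. w x = 1)"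

definition val_ring :: "('a::comm_ring_1 \<Rightarrow> ereal) \<Rightarrow> 'a set" where
  "val_ring w = {z. 0 \<le> w z}"

definition val_max :: "'a::comm_ring_1 set \<Rightarrow> ('a \<Rightarrow> ereal) \<Rightarrow> 'a set" where
  "val_max B w = {z\<in>B. 0 < w z}"

definition ideal_mult :: "'a::comm_ring_1 set \<Rightarrow> 'a set \<Rightarrow> 'a set \<Rightarrow> 'a set" where
  "ideal_mult B P Q = ideal_gen B {a * b | a b. a \<in> P \<and> b \<in> Q}"

fun ideal_pow :: "'a::comm_ring_1 set \<Rightarrow> 'a set \<Rightarrow> nat \<Rightarrow> 'a set" where
  "ideal_pow B P 0 = B"
| "ideal_pow B P (Suc k) = ideal_mult B P (ideal_pow B P k)"

text \<open>\<open>mprod B m k n = m_1^{n_1} \<cdots> m_k^{n_k}\<close> (indices start at 1).\<close>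
fun mprod :: "'a::comm_ring_1 set \<Rightarrow> (nat \<Rightarrow> 'a set) \<Rightarrow> nat \<Rightarrow> (nat \<Rightarrow> nat) \<Rightarrow> 'a set" where
  "mprod B m 0 n = B"
| "mprod B m (Suc k) n = ideal_mult B (ideal_pow B (m (Suc k)) (n (Suc k))) (mprod B m k n)"

text \<open>\<open>dim_F (R / N)\<close> for an additive subgroup N of R: the least number of elements of R
whose residue classes span R/N over F.\<close>
definition quot_dim :: "'a::comm_ring_1 set \<Rightarrow> 'a set \<Rightarrow> 'a set \<Rightarrow> nat" where
  "quot_dim F R N = (LEAST k. \<exists>b::nat \<Rightarrow> 'a. (\<forall>j<k. b j \<in> R) \<and>
      (\<forall>z\<in>R. \<exists>c. (\<forall>j<k. c j \<in> F) \<and> z - (\<Sum>j<k. c j * b j) \<in> N))"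

text \<open>\<open>\<ell>(n) = dim_F (R0 / (R0 \<inter> m^n))\<close> where m_i are the maximal ideals of the
integral closure attached to the valuations v_1..v_r.\<close>
definition ell :: "'a::comm_ring_1 set \<Rightarrow> 'a set \<Rightarrow> nat \<Rightarrow> (nat \<Rightarrow> 'a \<Rightarrow> ereal)
    \<Rightarrow> (nat \<Rightarrow> nat) \<Rightarrow> nat" where
  "ell R0 F r v n = quot_dim F R0 (R0 \<inter> mprod (int_closure R0) (\<lambda>i. val_max (int_closure R0) (v i)) r n)"

text \<open>Elements of \<open>\<int>_+^r\<close> are represented as functions \<open>nat \<Rightarrow> nat\<close>, vanishing outside \<open>{1..r}\<close>.\<close>
definition vecs :: "nat \<Rightarrow> (nat \<Rightarrow> nat) set" where
  "vecs r = {n. \<forall>i. i \<notin> {1..r} \<longrightarrow> n i = 0}"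

definition value_semigroup :: "'a::comm_ring_1 set \<Rightarrow> nat \<Rightarrow> (nat \<Rightarrow> 'a \<Rightarrow> ereal) \<Rightarrow> (nat \<Rightarrow> nat) set" where
  "value_semigroup R0 r v = {n \<in> vecs r. \<exists>z\<in>R0. z \<noteq> 0 \<and> (\<forall>i\<in>{1..r}. v i z = ereal (real (n i)))}"

definition Delta :: "'a::comm_ring_1 set \<Rightarrow> nat \<Rightarrow> (nat \<Rightarrow> 'a \<Rightarrow> ereal) \<Rightarrow> nat set
    \<Rightarrow> (nat \<Rightarrow> nat) \<Rightarrow> (nat \<Rightarrow> nat) set" where
  "Delta R0 r v J n = {\<beta> \<in> value_semigroup R0 r v.
      (\<forall>i\<in>J. \<beta> i = n i) \<and> (\<forall>t\<in>{1..r} - J. n t < \<beta> t)}"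

definition maximal_point :: "'a::comm_ring_1 set \<Rightarrow> nat \<Rightarrow> (nat \<Rightarrow> 'a \<Rightarrow> ereal) \<Rightarrow> (nat \<Rightarrow> nat) \<Rightarrow> bool" where
  "maximal_point R0 r v n \<longleftrightarrow> n \<in> value_semigroup R0 r v \<and> (\<forall>i\<in>{1..r}. Delta R0 r v {i} n = {})"

definition of_kind :: "'a::comm_ring_1 set \<Rightarrow> nat \<Rightarrow> (nat \<Rightarrow> 'a \<Rightarrow> ereal) \<Rightarrow> (nat \<Rightarrow> nat)
    \<Rightarrow> (nat \<Rightarrow> nat) \<Rightarrow> bool" where
  "of_kind R0 r v xs n \<longleftrightarrow> maximal_point R0 r v n \<and>
     (\<forall>j\<in>{2..r-1}.
        (xs j = 0 \<and> (\<forall>J. J \<subset> {1..r} \<and> card J = j \<longrightarrow> Delta R0 r v J n = {}))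
      \<or> (xs j = 1 \<and> (\<forall>J. J \<subset> {1..r} \<and> card J = j \<longrightarrow> Delta R0 r v J n \<noteq> {})))"

definition e_first :: "nat \<Rightarrow> nat \<Rightarrow> nat" where
  "e_first h = (\<lambda>i. if 1 \<le> i \<and> i \<le> h then 1 else 0)"

definition dh :: "'a::comm_ring_1 set \<Rightarrow> 'a set \<Rightarrow> nat \<Rightarrow> (nat \<Rightarrow> 'a \<Rightarrow> ereal)
    \<Rightarrow> nat \<Rightarrow> (nat \<Rightarrow> nat) \<Rightarrow> int" where
  "dh R0 F r v h n = int (ell R0 F r v (\<lambda>i. n i + e_first h i)) - int (ell R0 F r v n)"

end

theory Submission
  imports Defs
begin

(* Write W m = R0 \<inter> \<mm>^m = {z \<in> R0. v_i z \<ge> m_i for all i}, so \<ell>(m) = dim_F (R0 / W m).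
   1. Discrete valuations, ideals, and a Krull-intersection statement for Noetherian local
      rings.  With it, only 0 has infinite value everywhere, every element with finite values
      is invertible in the total ring of fractions, and B contains uniformizers that are units
      at the other places.  Hence \<mm>^m is the ideal of B cut out by the bounds v_i \<ge> m_i.
   2. Linear algebra over F: the codimension grows by exactly one when a subspace is cut down
      by one further generator.  By residue degree one this gives the basic step
        \<ell>(m + e_i) = \<ell>(m) + [some z \<in> W m has v_i z = m_i].
   3. Constructions in S: every element of R0 with prescribed values and lower bounds can be
      turned into a point of S, and (since q \<ge> r) \<Delta>_J1(n), \<Delta>_J2(n) \<noteq> {} implies
      \<Delta>_{J1 \<union> J2}(n) \<noteq> {}.  So the kind x_2,...,x_{r-1} of a maximal point is monotone.
   4. Raising the coordinates 1, ..., h one at a time, \<ell> jumps at k iff k \<le> x + 1;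
      summing the jumps gives d^h(n) = min h (x + 1). *)

locale dval =
  fixes w :: "'a::comm_ring_1 \<Rightarrow> ereal"
  assumes dv: "discrete_valuation w"
begin

lemma w_zero[simp]: "w 0 = \<infinity>"
  using dv by (simp add: discrete_valuation_def)

lemma w_one[simp]: "w 1 = 0"
  using dv by (simp add: discrete_valuation_def)

lemma w_mult: "w (x * y) = w x + w y"
  using dv by (simp add: discrete_valuation_def)

lemma w_add: "min (w x) (w y) \<le> w (x + y)"
  using dv by (simp add: discrete_valuation_def)

lemma w_int: "w x = \<infinity> \<or> (\<exists>k::int. w x = ereal (real_of_int k))"
  using dv by (simp add: discrete_valuation_def)

lemma w_not_minf: "w x \<noteq> -\<infinity>"
  using w_int[of x] by auto

lemma w_minus_one[simp]: "w (-1) = 0"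
proof -
  have "w (-1) + w (-1) = 0" using w_mult[of "-1" "-1"] by simp
  then show ?thesis using w_int[of "-1"] by auto
qed

lemma w_uminus[simp]: "w (- x) = w x"
  using w_mult[of "-1" x] by simp

lemma w_diff: "min (w x) (w y) \<le> w (x - y)"
  using w_add[of x "-y"] by simp

lemma w_strict: assumes "w x < w y" shows "w (x + y) = w x"
proof -
  have "w x \<le> w (x + y)" using w_add[of x y] assms by simp
  moreover have "min (w (x + y)) (w y) \<le> w x" using w_diff[of "x + y" y] by simp
  then have "w (x + y) \<le> w x" using assms by (auto simp: min_def split: if_splits)
  ultimately show ?thesis by simp
qed

lemma w_unit: assumes "x * y = 1" shows "w x \<noteq> \<infinity>" "w y = - w x"
proof -
  have h: "w x + w y = 0" using w_mult[of x y] assms by simp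
  show "w x \<noteq> \<infinity>" using h w_int[of y] by auto
  show "w y = - w x" using h w_int[of y] w_int[of x] by auto
qed

lemma w_pow: assumes "w x = ereal a" shows "w (x ^ k) = ereal (real k * a)"
  by (induction k) (use assms w_mult in \<open>simp_all add: algebra_simps\<close>)

lemma w_pow_ge: assumes "1 \<le> w x" shows "ereal (real k) \<le> w (x ^ k)"
proof (cases "w x")
  case (real a)
  then show ?thesis using assms w_pow[of x a k] by (simp add: mult_le_cancel_left1)
next
  case PInf
  then show ?thesis
    by (cases k) (simp_all add: w_mult w_not_minf)
qed (use w_not_minf in auto)

lemma w_prod: "finite A \<Longrightarrow> w (prod f A) = (\<Sum>x\<in>A. w (f x))"
  by (induction A rule: finite_induct) (simp_all add: w_mult)

lemma w_sum_ge: "finite A \<Longrightarrow> (\<And>x. x \<in> A \<Longrightarrow> c \<le> w (f x)) \<Longrightarrow> c \<le> w (sum f A)"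
proof (induction A rule: finite_induct)
  case (insert x A)
  then have "c \<le> min (w (f x)) (w (sum f A))" by simp
  also have "\<dots> \<le> w (f x + sum f A)" by (rule w_add)
  finally show ?case using insert by simp
qed simp

text \<open>Values are integers, so a value exceeding \<open>m\<close> is at least \<open>m + 1\<close>.\<close>
lemma w_int_succ: assumes "ereal (real m) < w x" shows "ereal (real (Suc m)) \<le> w x"
proof (cases "w x = \<infinity>")
  case False
  then obtain k :: int where k: "w x = ereal (real_of_int k)" using w_int[of x] by auto
  then have "int m < k" using assms by simp
  then show ?thesis using k by simp
qed simp

lemma w_pos_ge1: "0 < w x \<Longrightarrow> 1 \<le> w x"
  using w_int_succ[of 0 x] by (simp add: zero_ereal_def one_ereal_def)

end

definition val_nat :: "ereal \<Rightarrow> nat" where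
  "val_nat x = nat \<lfloor>real_of_ereal x\<rfloor>"

lemma (in dval) w_val_nat: assumes "0 \<le> w x" "w x \<noteq> \<infinity>"
  shows "w x = ereal (real (val_nat (w x)))"
proof -
  obtain k :: int where k: "w x = ereal (real_of_int k)" using w_int[of x] assms by auto
  then show ?thesis using assms by (simp add: val_nat_def)
qed

lemma (in dval) w_perturb:
  assumes s: "1 \<le> w s" "w s \<noteq> \<infinity>" and M: "w x \<noteq> \<infinity> \<Longrightarrow> w x < ereal (real M)"
  shows "w (x + s ^ M) \<noteq> \<infinity>" "w x \<noteq> \<infinity> \<Longrightarrow> w (x + s ^ M) = w x"
    "min (w x) (ereal (real M)) \<le> w (x + s ^ M)"
proof -
  obtain a where a: "w s = ereal a" using s w_not_minf[of s] by (cases "w s") auto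
  have sM: "w (s ^ M) = ereal (real M * a)" using w_pow[OF a] .
  have sM_ge: "ereal (real M) \<le> w (s ^ M)" using w_pow_ge[OF s(1)] .
  show "min (w x) (ereal (real M)) \<le> w (x + s ^ M)"
    using w_add[of x "s ^ M"] sM_ge by (meson min.mono order.trans order_refl)
  show fin: "w x \<noteq> \<infinity> \<Longrightarrow> w (x + s ^ M) = w x"
    using M sM_ge w_strict by (meson order_less_le_trans)
  show "w (x + s ^ M) \<noteq> \<infinity>"
  proof (cases "w x = \<infinity>")
    case True
    then have "w (s ^ M) < w x" using sM by simp
    then show ?thesis using w_strict[of "s ^ M" x] sM by (simp add: add.commute)
  qed (use fin in simp)
qed

lemma ereal_ge_shift: "ereal (real m) \<le> x \<Longrightarrow> 0 \<le> x + ereal (- real m)"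
  by (cases x) auto

lemma ereal_ge1_pos: "1 \<le> (x::ereal) \<Longrightarrow> 0 < x"
  by (cases x) auto

lemma ereal_ge1_double: "1 \<le> (x::ereal) \<Longrightarrow> 1 < x + x"
  by (cases x) auto

lemma ereal_pos_add: "0 \<le> (x::ereal) \<Longrightarrow> 0 < y \<Longrightarrow> 0 < x + y"
  by (cases x; cases y) auto

lemma ideal_gen_least: "ideal_in R C \<Longrightarrow> G \<subseteq> C \<Longrightarrow> ideal_gen R G \<subseteq> C"
  unfolding ideal_gen_def by blast

lemma ideal_gen_superset: "G \<subseteq> ideal_gen R G"
  unfolding ideal_gen_def by blast

lemma ideal_mult_mem: "a \<in> P \<Longrightarrow> b \<in> Q \<Longrightarrow> a * b \<in> ideal_mult R P Q"
  unfolding ideal_mult_def by (rule subsetD[OF ideal_gen_superset]) blast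

lemma ideal_pow_mem: "p \<in> P \<Longrightarrow> u \<in> R \<Longrightarrow> p ^ k * u \<in> ideal_pow R P k"
proof (induction k arbitrary: u)
  case (Suc k)
  have "p ^ Suc k * u = p * (p ^ k * u)" by (simp add: algebra_simps)
  then show ?case using Suc ideal_mult_mem[of p P "p ^ k * u" "ideal_pow R P k" R]
    by (simp del: power_Suc)
qed simp

definition principal_ideal :: "'a::comm_ring_1 set \<Rightarrow> 'a \<Rightarrow> 'a set" where
  "principal_ideal R a = {t * a | t. t \<in> R}"

lemma principal_ideal_ideal:
  assumes R: "subring R" and a: "a \<in> R"
  shows "ideal_in R (principal_ideal R a)"
proof -
  have R0: "0 \<in> R" and Radd: "\<And>x y. x \<in> R \<Longrightarrow> y \<in> R \<Longrightarrow> x + y \<in> R"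
    and Rmult: "\<And>x y. x \<in> R \<Longrightarrow> y \<in> R \<Longrightarrow> x * y \<in> R"
    using R unfolding subring_def by blast+
  show ?thesis
    unfolding ideal_in_def principal_ideal_def
  proof (intro conjI ballI subsetI)
    fix x assume "x \<in> {t * a |t. t \<in> R}"
    then show "x \<in> R" using Rmult a by blast
  next
    have "0 = 0 * a" by simp
    then show "0 \<in> {t * a |t. t \<in> R}" using R0 by blast
  next
    fix x y assume "x \<in> {t * a |t. t \<in> R}" "y \<in> {t * a |t. t \<in> R}"
    then obtain t t' where tt: "t \<in> R" "t' \<in> R" "x = t * a" "y = t' * a" by blast
    then have "x + y = (t + t') * a" by (simp add: distrib_right)
    then show "x + y \<in> {t * a |t. t \<in> R}" using Radd[OF tt(1,2)] by blast
  next
    fix x c assume "x \<in> {t * a |t. t \<in> R}" "c \<in> R"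
    then obtain t where t: "t \<in> R" "x = t * a" by blast
    then have "c * x = (c * t) * a" by (simp add: mult.assoc)
    then show "c * x \<in> {t * a |t. t \<in> R}" using Rmult[OF \<open>c \<in> R\<close> t(1)] by blast
  qed
qed

lemma ideal_chain_Union:
  assumes I: "\<And>k. ideal_in R (I k)" and mono: "\<And>k. I k \<subseteq> I (Suc k)"
  shows "ideal_in R (\<Union>k. I k)"
proof -
  have up: "I k \<subseteq> I (max k k')" "I k' \<subseteq> I (max k k')" for k k'
    using lift_Suc_mono_le[of I, OF mono] by simp_all
  show ?thesis
    unfolding ideal_in_def
  proof (intro conjI ballI)
    have "I k \<subseteq> R" for k using I[of k] by (simp add: ideal_in_def)
    then show "(\<Union>k. I k) \<subseteq> R" by blast
    show "0 \<in> (\<Union>k. I k)" using I[of 0] unfolding ideal_in_def by blast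
  next
    fix a b assume "a \<in> (\<Union>k. I k)" "b \<in> (\<Union>k. I k)"
    then obtain k k' where "a \<in> I k" "b \<in> I k'" by blast
    then have "a \<in> I (max k k')" "b \<in> I (max k k')" using up by blast+
    then have "a + b \<in> I (max k k')" using I[of "max k k'"] unfolding ideal_in_def by blast
    then show "a + b \<in> (\<Union>k. I k)" by blast
  next
    fix a s assume "a \<in> (\<Union>k. I k)" "s \<in> R"
    then obtain k where "a \<in> I k" by blast
    then have "s * a \<in> I k" using I[of k] \<open>s \<in> R\<close> unfolding ideal_in_def by blast
    then show "s * a \<in> (\<Union>k. I k)" by blast
  qed
qed

lemma noetherian_chain_bounded:
  assumes R: "noetherian R" and I: "\<And>k. ideal_in R (I k)" and mono: "\<And>k. I k \<subseteq> I (Suc k)"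
  shows "\<exists>N. (\<Union>k. I k) \<subseteq> I N"
proof -
  have "ideal_in R (\<Union>k. I k)" by (rule ideal_chain_Union) (rule I, rule mono)
  then obtain G where G: "finite G" "G \<subseteq> (\<Union>k. I k)" "(\<Union>k. I k) = ideal_gen R G"
    using R unfolding noetherian_def by (meson)
  have "\<forall>g\<in>G. \<exists>k. g \<in> I k" using G(2) by blast
  then obtain kg where kg: "\<forall>g\<in>G. g \<in> I (kg g)" by (rule bchoice[elim_format]) blast
  define N where "N = sum kg G"
  have "G \<subseteq> I N"
  proof
    fix g assume g: "g \<in> G"
    have "kg g \<le> N" unfolding N_def using G(1) g by (simp add: member_le_sum)
    then have "I (kg g) \<subseteq> I N" by (rule lift_Suc_mono_le[of I, OF mono])
    then show "g \<in> I N" using kg g by blast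
  qed
  then have "ideal_gen R G \<subseteq> I N" by (rule ideal_gen_least[OF I])
  then show ?thesis using G(3) by (intro exI[of _ N]) simp
qed

lemma local_one_minus_unit:
  assumes R: "local_ring R" and s: "s \<in> max_ideal R" and t: "t \<in> R"
  shows "\<exists>u\<in>R. (1 - t * s) * u = 1"
proof -
  have M: "ideal_in R (max_ideal R)" and sub: "subring R" using R by (auto simp: local_ring_def)
  have ts: "t * s \<in> max_ideal R" using M s t unfolding ideal_in_def by blast
  then have "t * s \<in> R" by (simp add: max_ideal_def)
  then have "1 + - (t * s) \<in> R" using sub unfolding subring_def by blast
  then have inR: "1 - t * s \<in> R" by simp
  have "1 - t * s \<notin> max_ideal R"
  proof
    assume "1 - t * s \<in> max_ideal R"
    then have "(1 - t * s) + t * s \<in> max_ideal R" using ts M unfolding ideal_in_def by blast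
    then show False by (simp add: max_ideal_def units_in_def)
  qed
  then show ?thesis using inR by (simp add: max_ideal_def units_in_def)
qed

text \<open>A Krull-intersection type statement: in a Noetherian local ring an element that is
  divisible by arbitrary powers of a fixed non-unit \<open>s\<close>, compatibly, is zero.\<close>
lemma noetherian_local_divisible_zero:
  assumes loc: "local_ring R" and noeth: "noetherian R" and s: "s \<in> max_ideal R"
    and aR: "\<And>k. a k \<in> R" and a: "\<And>k. a k = s * a (Suc k)"
  shows "a 0 = 0"
proof -
  have sub: "subring R" using loc by (simp add: local_ring_def)
  have sR: "s \<in> R" using s by (simp add: max_ideal_def)
  have chain: "principal_ideal R (a k) \<subseteq> principal_ideal R (a (Suc k))" for k
  proof
    fix x assume "x \<in> principal_ideal R (a k)"
    then obtain t where "t \<in> R" "x = t * a k" unfolding principal_ideal_def by blast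
    then have "t * s \<in> R" "x = (t * s) * a (Suc k)" using a[of k] sR sub by (simp_all add: subring_def mult.assoc)
    then show "x \<in> principal_ideal R (a (Suc k))" unfolding principal_ideal_def by blast
  qed
  obtain N where N: "(\<Union>k. principal_ideal R (a k)) \<subseteq> principal_ideal R (a N)"
    using noetherian_chain_bounded[of R "\<lambda>k. principal_ideal R (a k)", OF noeth principal_ideal_ideal[OF sub aR] chain] by blast
  have "a (Suc N) \<in> principal_ideal R (a (Suc N))"
    unfolding principal_ideal_def using sub by (force simp: subring_def)
  then obtain t where t: "t \<in> R" "a (Suc N) = t * a N" using N unfolding principal_ideal_def by blast
  then have "a (Suc N) = (t * s) * a (Suc N)" using a[of N] by (metis mult.assoc)
  then have "(1 - t * s) * a (Suc N) = 0" by (metis diff_self left_diff_distrib mult_1_left)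
  moreover obtain u where "(1 - t * s) * u = 1" using local_one_minus_unit[OF loc s t(1)] by blast
  ultimately have zero: "a (Suc N) = 0" by (metis mult.left_commute mult_1_right mult_zero_right)
  have pow: "a 0 = s ^ k * a k" for k
  proof (induction k)
    case (Suc k)
    then show ?case using a[of k] by (simp add: mult.assoc)
  qed simp
  show ?thesis using pow[of "Suc N"] zero by simp
qed

text \<open>The standing hypotheses of the theorem (with \<open>r \<ge> 2\<close>; the cases \<open>r \<le> 1\<close> are degenerate).
  \<open>B\<close> is the integral closure, the intersection of the valuation rings of \<open>v 1, \<dots>, v r\<close>.\<close>
locale setting =
  fixes R0 F :: "'a::comm_ring_1 set" and v :: "nat \<Rightarrow> 'a \<Rightarrow> ereal" and r :: nat
  assumes O_CM: "one_dim_CM_local R0"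
    and K_frac: "total_ring_of_fractions R0"
    and coeff: "coefficient_field R0 F"
    and F_finite: "finite F" and card_F: "r \<le> card F"
    and Ob_finite: "finite_over R0 (int_closure R0)"
    and vals: "\<forall>i\<in>{1..r}. discrete_valuation (v i)"
    and Ob_inter: "int_closure R0 = (\<Inter>i\<in>{1..r}. val_ring (v i))"
    and distinct_max: "\<forall>i\<in>{1..r}. \<forall>j\<in>{1..r}. i \<noteq> j \<longrightarrow>
                          val_max (int_closure R0) (v i) \<noteq> val_max (int_closure R0) (v j)"
    and res_deg1: "\<forall>i\<in>{1..r}. \<forall>z\<in>int_closure R0. \<exists>c\<in>F. z - c \<in> val_max (int_closure R0) (v i)"
    and r_ge2: "2 \<le> r"
begin

abbreviation "B \<equiv> int_closure R0"

lemma val: "i \<in> {1..r} \<Longrightarrow> dval (v i)"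
  using vals by (simp add: dval_def)

lemma R0_local: "local_ring R0" and R0_noetherian: "noetherian R0"
  using O_CM by (simp_all add: one_dim_CM_local_def)

lemma R0_subring: "subring R0"
  using R0_local by (simp add: local_ring_def)

lemma R0_0[simp]: "0 \<in> R0" and R0_1[simp]: "1 \<in> R0"
  using R0_subring by (simp_all add: subring_def)

lemma R0_add[simp]: "a \<in> R0 \<Longrightarrow> b \<in> R0 \<Longrightarrow> a + b \<in> R0"
  and R0_mult[simp]: "a \<in> R0 \<Longrightarrow> b \<in> R0 \<Longrightarrow> a * b \<in> R0"
  and R0_uminus[simp]: "a \<in> R0 \<Longrightarrow> - a \<in> R0"
  using R0_subring by (simp_all add: subring_def)

lemma R0_diff[simp]: "a \<in> R0 \<Longrightarrow> b \<in> R0 \<Longrightarrow> a - b \<in> R0"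
  using R0_add[of a "- b"] by simp

lemma R0_pow[simp]: "a \<in> R0 \<Longrightarrow> a ^ k \<in> R0"
  by (induction k) auto

lemma R0_sum: "finite A \<Longrightarrow> (\<And>x. x \<in> A \<Longrightarrow> f x \<in> R0) \<Longrightarrow> sum f A \<in> R0"
  by (induction A rule: finite_induct) auto

lemma R0_prod: "finite A \<Longrightarrow> (\<And>x. x \<in> A \<Longrightarrow> f x \<in> R0) \<Longrightarrow> prod f A \<in> R0"
  by (induction A rule: finite_induct) auto

lemma F_subfield: "subfield F" and F_R0: "F \<subseteq> R0"
  using coeff by (simp_all add: coefficient_field_def)

lemma F_0[simp]: "0 \<in> F" and F_1[simp]: "1 \<in> F"
  using F_subfield by (simp_all add: subfield_def subring_def)

lemma F_add[simp]: "a \<in> F \<Longrightarrow> b \<in> F \<Longrightarrow> a + b \<in> F"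
  and F_mult[simp]: "a \<in> F \<Longrightarrow> b \<in> F \<Longrightarrow> a * b \<in> F"
  and F_uminus[simp]: "a \<in> F \<Longrightarrow> - a \<in> F"
  using F_subfield unfolding subfield_def subring_def by blast+

lemma F_diff[simp]: "a \<in> F \<Longrightarrow> b \<in> F \<Longrightarrow> a - b \<in> F"
  using F_add[of a "- b"] by simp

lemma F_inverse: "a \<in> F \<Longrightarrow> a \<noteq> 0 \<Longrightarrow> \<exists>b\<in>F. a * b = 1"
  using F_subfield by (simp add: subfield_def)

lemma R0_B: "R0 \<subseteq> B"
proof
  fix z assume z: "z \<in> R0"
  have "integral_over R0 z"
    unfolding integral_over_def
    by (rule exI[of _ "1::nat"], rule exI[of _ "\<lambda>_. - z"]) (simp add: z)
  then show "z \<in> B" by (simp add: int_closure_def)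
qed

lemma B_iff: "z \<in> B \<longleftrightarrow> (\<forall>i\<in>{1..r}. 0 \<le> v i z)"
  using Ob_inter by (simp add: val_ring_def)

lemma B_nonneg: "z \<in> B \<Longrightarrow> i \<in> {1..r} \<Longrightarrow> 0 \<le> v i z"
  using B_iff by blast

lemma R0_nonneg: "z \<in> R0 \<Longrightarrow> i \<in> {1..r} \<Longrightarrow> 0 \<le> v i z"
  using B_iff R0_B by blast

lemma B_0: "0 \<in> B"
  unfolding B_iff using dval.w_zero[OF val] by simp

lemma B_add: assumes "a \<in> B" "b \<in> B" shows "a + b \<in> B"
  unfolding B_iff
proof
  fix i assume i: "i \<in> {1..r}"
  have "0 \<le> min (v i a) (v i b)" using assms i B_nonneg by simp
  also have "\<dots> \<le> v i (a + b)" by (rule dval.w_add[OF val[OF i]])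
  finally show "0 \<le> v i (a + b)" .
qed

lemma B_mult: "a \<in> B \<Longrightarrow> b \<in> B \<Longrightarrow> a * b \<in> B"
  unfolding B_iff using dval.w_mult[OF val] by simp

lemma B_sum: "finite A \<Longrightarrow> (\<And>x. x \<in> A \<Longrightarrow> f x \<in> B) \<Longrightarrow> sum f A \<in> B"
  by (induction A rule: finite_induct) (simp_all add: B_0 B_add)

lemma B_1: "1 \<in> B"
  using R0_B by auto

lemma B_prod: "finite A \<Longrightarrow> (\<And>x. x \<in> A \<Longrightarrow> f x \<in> B) \<Longrightarrow> prod f A \<in> B"
  by (induction A rule: finite_induct) (simp_all add: B_1 B_mult)

text \<open>Non-zero constants are units of \<open>R0\<close> and therefore have value \<open>0\<close>.\<close>
lemma val_const: assumes "c \<in> F" "c \<noteq> 0" "i \<in> {1..r}" shows "v i c = 0"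
proof -
  interpret dval "v i" using val assms(3) .
  obtain c' where c': "c' \<in> F" "c * c' = 1" using F_inverse assms by blast
  have "v i c' = - v i c" using w_unit c' by simp
  moreover have "0 \<le> v i c'" "0 \<le> v i c" using R0_nonneg F_R0 c' assms by auto
  ultimately show ?thesis by (cases "v i c") auto
qed

lemma val_const_mult: "c \<in> F \<Longrightarrow> c \<noteq> 0 \<Longrightarrow> j \<in> {1..r} \<Longrightarrow> v j (c * w) = v j w"
  using val_const dval.w_mult[OF val] by simp

lemma nonzerodivisor_mult:
  "nonzerodivisor_in R0 x \<Longrightarrow> nonzerodivisor_in R0 y \<Longrightarrow> nonzerodivisor_in R0 (x * y)"
  unfolding nonzerodivisor_in_def by (metis R0_mult mult.assoc)

lemma nonzerodivisor_prod:
  "finite A \<Longrightarrow> (\<And>g. g \<in> A \<Longrightarrow> nonzerodivisor_in R0 (f g)) \<Longrightarrow> nonzerodivisor_in R0 (prod f A)"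
proof (induction A rule: finite_induct)
  case empty then show ?case by (simp add: nonzerodivisor_in_def)
next
  case (insert x A) then show ?case by (simp add: nonzerodivisor_mult)
qed

lemma fraction: "\<exists>a\<in>R0. \<exists>b. nonzerodivisor_in R0 b \<and> k * b = a"
  using K_frac by (simp add: total_ring_of_fractions_def)

lemma nonzerodivisor_inverse: "nonzerodivisor_in R0 b \<Longrightarrow> \<exists>w. b * w = 1"
  using K_frac by (simp add: total_ring_of_fractions_def)

text \<open>Since \<open>B\<close> is a finite \<open>R0\<close>-module inside the total ring of fractions, a common
  denominator of its generators is a non-zerodivisor \<open>d\<close> with \<open>d B \<subseteq> R0\<close>.\<close>
lemma conductor: "\<exists>d. nonzerodivisor_in R0 d \<and> (\<forall>z\<in>B. d * z \<in> R0)"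
proof -
  obtain G where G: "finite G" "\<forall>z\<in>B. \<exists>a. (\<forall>g\<in>G. a g \<in> R0) \<and> z = (\<Sum>g\<in>G. a g * g)"
    using Ob_finite by (auto simp: finite_over_def)
  have "\<forall>g. \<exists>b. nonzerodivisor_in R0 b \<and> g * b \<in> R0" using fraction by metis
  then obtain den where den: "\<And>g. nonzerodivisor_in R0 (den g) \<and> g * den g \<in> R0" by metis
  define d where "d = prod den G"
  have d_nzd: "nonzerodivisor_in R0 d" unfolding d_def using nonzerodivisor_prod den G by blast
  have dg: "d * g \<in> R0" if g: "g \<in> G" for g
  proof -
    have "d * g = (g * den g) * prod den (G - {g})"
      unfolding d_def using G g by (simp add: prod.remove algebra_simps)
    moreover have "prod den (G - {g}) \<in> R0"
      using R0_prod[of "G - {g}" den] den G by (simp add: nonzerodivisor_in_def)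
    ultimately show ?thesis using den by simp
  qed
  have "d * z \<in> R0" if "z \<in> B" for z
  proof -
    obtain a where a: "\<forall>g\<in>G. a g \<in> R0" "z = (\<Sum>g\<in>G. a g * g)" using G \<open>z \<in> B\<close> by blast
    have "d * z = (\<Sum>g\<in>G. a g * (d * g))" unfolding a(2) by (simp add: sum_distrib_left algebra_simps)
    then show ?thesis using R0_sum[of G "\<lambda>g. a g * (d * g)"] G a dg by simp
  qed
  with d_nzd show ?thesis by blast
qed

text \<open>Only \<open>0\<close> has infinite value at every \<open>v i\<close>: all multiples of such a \<open>y\<close> lie in \<open>B\<close>,
  so clearing denominators with the conductor yields an element of \<open>R0\<close> divisible by all
  powers of a regular non-unit \<open>s\<close>, which vanishes by the Krull-type lemma above.\<close>
lemma all_infinite_zero: assumes inf: "\<forall>i\<in>{1..r}. v i y = \<infinity>" shows "y = 0"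
proof -
  obtain a b where ab: "a \<in> R0" "nonzerodivisor_in R0 b" "y * b = a"
    using fraction by blast
  obtain b' where b': "b * b' = 1" using nonzerodivisor_inverse ab(2) by blast
  obtain s where s: "s \<in> max_ideal R0" "nonzerodivisor_in R0 s"
    using O_CM by (auto simp: one_dim_CM_local_def)
  obtain s' where s': "s * s' = 1" using nonzerodivisor_inverse s(2) by blast
  obtain d where d: "nonzerodivisor_in R0 d" "\<forall>z\<in>B. d * z \<in> R0" using conductor by blast
  have multiple_B: "c * y \<in> B" for c
    unfolding B_iff using inf dval.w_mult[OF val] dval.w_not_minf[OF val] by simp
  define ak where "ak k = d * a * s' ^ k" for k
  have "ak k = d * ((b * s' ^ k) * y)" for k
    unfolding ak_def using ab(3)[symmetric] by (simp add: algebra_simps)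
  then have akR: "ak k \<in> R0" for k using d multiple_B by simp
  have "ak k = s * ak (Suc k)" for k
  proof -
    have "s * ak (Suc k) = ak k * (s * s')" by (simp add: ak_def algebra_simps)
    then show ?thesis using s' by simp
  qed
  then have "ak 0 = 0"
    by (rule noetherian_local_divisible_zero[OF R0_local R0_noetherian s(1) akR])
  then have "a = 0" using d(1) ab(1) by (simp add: ak_def nonzerodivisor_in_def)
  then have "y * (b * b') = 0" using ab(3) by (simp add: mult.assoc[symmetric])
  then show "y = 0" using b' by simp
qed

lemma finite_val_unit: assumes fin: "\<forall>i\<in>{1..r}. v i p \<noteq> \<infinity>" shows "\<exists>q. p * q = 1"
proof -
  have p_regular: "y = 0" if "p * y = 0" for y
  proof (rule all_infinite_zero, intro ballI)
    fix i assume i: "i \<in> {1..r}"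
    have "v i p + v i y = \<infinity>" using dval.w_mult[OF val[OF i], of p y] that dval.w_zero[OF val[OF i]] by simp
    then show "v i y = \<infinity>" using fin i dval.w_not_minf[OF val[OF i], of p]
      by (cases "v i p"; cases "v i y") auto
  qed
  obtain a b where ab: "a \<in> R0" "nonzerodivisor_in R0 b" "p * b = a"
    using fraction by blast
  have "nonzerodivisor_in R0 a" unfolding nonzerodivisor_in_def
  proof (intro conjI ballI impI ab(1))
    fix t assume "t \<in> R0" "a * t = 0"
    then have "p * (b * t) = 0" using ab(3) by (simp add: mult.assoc[symmetric])
    then have "b * t = 0" using p_regular by blast
    then show "t = 0" using ab(2) \<open>t \<in> R0\<close> by (simp add: nonzerodivisor_in_def)
  qed
  then obtain a' where "a * a' = 1" using nonzerodivisor_inverse by blast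
  then have "p * (b * a') = 1" using ab(3) by (metis mult.assoc)
  then show ?thesis by blast
qed

end

context setting
begin

definition mm :: "nat \<Rightarrow> 'a set" where
  "mm i = val_max B (v i)"

lemma mm_iff: "z \<in> mm i \<longleftrightarrow> z \<in> B \<and> 0 < v i z"
  by (simp add: mm_def val_max_def)

lemma mm_ge1: "z \<in> mm i \<Longrightarrow> i \<in> {1..r} \<Longrightarrow> 1 \<le> v i z"
  using dval.w_pos_ge1[OF val] by (simp add: mm_iff)

lemma residue_const:
  assumes "i \<in> {1..r}" "z \<in> B" obtains c where "c \<in> F" "z - c \<in> mm i"
  using res_deg1 assms unfolding mm_def by blast

text \<open>The ideals \<open>\<mm>_i\<close> are maximal, so an inclusion between two of them is an equality.\<close>
lemma mm_subset_eq:
  assumes ij: "i \<in> {1..r}" "j \<in> {1..r}" and sub: "mm j \<subseteq> mm i"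
  shows "mm i \<subseteq> mm j"
proof
  fix z assume z: "z \<in> mm i"
  then have zB: "z \<in> B" by (simp add: mm_iff)
  obtain c where c: "c \<in> F" "z - c \<in> mm j" using residue_const[OF ij(2) zB] .
  have "z - c \<in> mm i" using c sub by blast
  then have "0 < min (v i z) (v i (z - c))" using z by (simp add: mm_iff)
  also have "\<dots> \<le> v i (z - (z - c))" by (rule dval.w_diff[OF val[OF ij(1)]])
  finally have "c = 0" using val_const[OF c(1) _ ij(1)] by fastforce
  then show "z \<in> mm j" using c by simp
qed

lemma separating_elem:
  assumes ij: "i \<in> {1..r}" "j \<in> {1..r}" "i \<noteq> j"
  shows "\<exists>a\<in>B. 1 \<le> v j a \<and> v i a = 0"
proof -
  have "mm i \<noteq> mm j" using distinct_max ij by (simp add: mm_def)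
  then obtain a where a: "a \<in> mm j" "a \<notin> mm i" using mm_subset_eq[OF ij(1,2)] by blast
  then have "a \<in> B" by (simp add: mm_iff)
  moreover have "v i a = 0" using a B_nonneg[OF \<open>a \<in> B\<close> ij(1)] by (simp add: mm_iff)
  moreover have "1 \<le> v j a" using mm_ge1[OF a(1) ij(2)] .
  ultimately show ?thesis by blast
qed

lemma elem_unit_at:
  assumes i: "i \<in> {1..r}"
  shows "\<exists>y\<in>B. v i y = 0 \<and> (\<forall>j\<in>{1..r}-{i}. 1 \<le> v j y)"
proof -
  have "\<forall>j\<in>{1..r}-{i}. \<exists>a\<in>B. 1 \<le> v j a \<and> v i a = 0" using separating_elem i by auto
  then obtain a where a: "\<And>j. j \<in> {1..r}-{i} \<Longrightarrow> a j \<in> B \<and> 1 \<le> v j (a j) \<and> v i (a j) = 0"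
    by metis
  define y where "y = prod a ({1..r}-{i})"
  have yB: "y \<in> B" unfolding y_def using B_prod[of "{1..r}-{i}" a] a by auto
  have "v i y = 0" unfolding y_def using dval.w_prod[OF val[OF i], of "{1..r}-{i}" a] a by simp
  moreover have "1 \<le> v j y" if j: "j \<in> {1..r}-{i}" for j
  proof -
    have jI: "j \<in> {1..r}" using j by simp
    have "y = a j * prod a ({1..r}-{i}-{j})" unfolding y_def using j by (simp add: prod.remove)
    then have "v j y = v j (a j) + v j (prod a ({1..r}-{i}-{j}))" using dval.w_mult[OF val[OF jI]] by simp
    moreover have "0 \<le> v j (prod a ({1..r}-{i}-{j}))"
      using B_nonneg[OF B_prod[of "{1..r}-{i}-{j}" a] jI] a by auto
    ultimately show ?thesis using a[OF j] by (metis add.right_neutral add_mono)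
  qed
  ultimately show ?thesis using yB by blast
qed

lemma elem_pos_at:
  assumes i: "i \<in> {1..r}"
  shows "\<exists>z\<in>B. 1 \<le> v i z \<and> (\<forall>j\<in>{1..r}-{i}. v j z = 0)"
proof -
  have "\<forall>j\<in>{1..r}. \<exists>y\<in>B. v j y = 0 \<and> (\<forall>k\<in>{1..r}-{j}. 1 \<le> v k y)" using elem_unit_at by blast
  then obtain y where y: "\<And>j. j \<in> {1..r} \<Longrightarrow> y j \<in> B \<and> v j (y j) = 0 \<and> (\<forall>k\<in>{1..r}-{j}. 1 \<le> v k (y j))"
    by metis
  define z where "z = sum y ({1..r}-{i})"
  have "z \<in> B" unfolding z_def using B_sum[of "{1..r}-{i}" y] y by auto
  moreover have "1 \<le> v i z" unfolding z_def
    by (rule dval.w_sum_ge[OF val[OF i]]) (use y i in auto)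
  moreover have "v j z = 0" if j: "j \<in> {1..r}-{i}" for j
  proof -
    have jI: "j \<in> {1..r}" using j by simp
    have "z = y j + sum y ({1..r}-{i}-{j})" unfolding z_def using j by (simp add: sum.remove)
    moreover have "1 \<le> v j (sum y ({1..r}-{i}-{j}))"
      by (rule dval.w_sum_ge[OF val[OF jI]]) (use y jI in auto)
    then have "v j (y j) < v j (sum y ({1..r}-{i}-{j}))" using y[OF jI] ereal_ge1_pos by simp
    ultimately show ?thesis using dval.w_strict[OF val[OF jI]] y[OF jI] by simp
  qed
  ultimately show ?thesis by blast
qed

lemma elem_value_one: assumes i: "i \<in> {1..r}" shows "\<exists>g\<in>B. v i g = 1"
proof -
  obtain x where x: "v i x = 1" using vals i unfolding discrete_valuation_def by blast
  obtain y where y: "y \<in> B" "v i y = 0" "\<forall>j\<in>{1..r}-{i}. 1 \<le> v j y" using elem_unit_at[OF i] by blast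
  text \<open>Multiplying by a high power of \<open>y\<close> repairs the negative values of \<open>x\<close> at the other places.\<close>
  define ex where "ex j = (if v j x = \<infinity> then 0 else nat \<lceil>- real_of_ereal (v j x)\<rceil>)" for j
  define N where "N = sum ex {1..r}"
  define g where "g = x * y ^ N"
  have "v i g = 1" unfolding g_def using dval.w_mult[OF val[OF i]] x dval.w_pow[OF val[OF i], of y 0 N] y
    by simp
  moreover have "0 \<le> v j g" if j: "j \<in> {1..r}" "j \<noteq> i" for j
  proof -
    have vy: "ereal (real N) \<le> v j (y ^ N)" using dval.w_pow_ge[OF val[OF j(1)]] y j by simp
    have vg: "v j g = v j x + v j (y ^ N)" unfolding g_def using dval.w_mult[OF val[OF j(1)]] by simp
    show ?thesis
    proof (cases "v j x")
      case (real a)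
      have "ex j \<le> N" unfolding N_def by (rule member_le_sum) (use j in auto)
      moreover have "- a \<le> real (ex j)" unfolding ex_def using real by simp linarith
      ultimately have "0 \<le> ereal a + ereal (real N)" by simp
      also have "\<dots> \<le> ereal a + v j (y ^ N)" by (rule add_left_mono[OF vy])
      finally show ?thesis using vg real by simp
    next
      case PInf
      then show ?thesis using vg dval.w_not_minf[OF val[OF j(1)]] by simp
    qed (use dval.w_not_minf[OF val[OF j(1)]] in simp)
  qed
  ultimately have "g \<in> B" unfolding B_iff by (metis zero_less_one_ereal)
  then show ?thesis using \<open>v i g = 1\<close> by blast
qed

text \<open>A uniformizer of \<open>v i\<close> that is a unit at all other places; it is invertible in the
  total ring of fractions, so multiplying by its powers shifts the \<open>i\<close>-th value freely.\<close>
lemma uniformizer: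
  assumes i: "i \<in> {1..r}"
  shows "\<exists>p\<in>B. v i p = 1 \<and> (\<forall>j\<in>{1..r}-{i}. v j p = 0) \<and> (\<exists>q. p * q = 1)"
proof -
  obtain g where g: "g \<in> B" "v i g = 1" using elem_value_one[OF i] by blast
  obtain y where y: "y \<in> B" "v i y = 0" "\<forall>j\<in>{1..r}-{i}. 1 \<le> v j y" using elem_unit_at[OF i] by blast
  obtain z where z: "z \<in> B" "1 \<le> v i z" "\<forall>j\<in>{1..r}-{i}. v j z = 0" using elem_pos_at[OF i] by blast
  define p where "p = g * y + z * z"
  have "v i p = 1"
  proof -
    have "v i (g * y) = 1" using dval.w_mult[OF val[OF i]] g y by simp
    moreover have "1 < v i (z * z)" using dval.w_mult[OF val[OF i]] ereal_ge1_double z by simp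
    ultimately show ?thesis unfolding p_def using dval.w_strict[OF val[OF i]] by simp
  qed
  moreover have "v j p = 0" if j: "j \<in> {1..r}-{i}" for j
  proof -
    have jI: "j \<in> {1..r}" using j by simp
    have "v j (z * z) = 0" using dval.w_mult[OF val[OF jI]] z j by simp
    moreover have "0 + 1 \<le> v j g + v j y" using B_nonneg[OF g(1) jI] y j by (intro add_mono) auto
    then have "0 < v j (g * y)" using dval.w_mult[OF val[OF jI]] ereal_ge1_pos by simp
    ultimately show ?thesis unfolding p_def using dval.w_strict[OF val[OF jI], of "z * z"]
      by (simp add: add.commute)
  qed
  moreover have "p \<in> B" unfolding p_def using g y z B_add B_mult by simp
  moreover have "\<exists>q. p * q = 1"
    by (rule finite_val_unit) (use calculation in \<open>force\<close>)
  ultimately show ?thesis by blast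
qed

end

context setting
begin

definition unif :: "nat \<Rightarrow> 'a" where
  "unif i = (SOME p. p \<in> B \<and> v i p = 1 \<and> (\<forall>j\<in>{1..r}-{i}. v j p = 0) \<and> (\<exists>q. p * q = 1))"

definition unif_inv :: "nat \<Rightarrow> 'a" where
  "unif_inv i = (SOME q. unif i * q = 1)"

lemma unif:
  assumes i: "i \<in> {1..r}"
  shows "unif i \<in> B" "v i (unif i) = 1" "\<And>j. j \<in> {1..r}-{i} \<Longrightarrow> v j (unif i) = 0"
    "unif i * unif_inv i = 1"
proof -
  have "\<exists>p. p \<in> B \<and> v i p = 1 \<and> (\<forall>j\<in>{1..r}-{i}. v j p = 0) \<and> (\<exists>q. p * q = 1)"
    using uniformizer[OF i] by blast
  then have u: "unif i \<in> B \<and> v i (unif i) = 1 \<and> (\<forall>j\<in>{1..r}-{i}. v j (unif i) = 0) \<and> (\<exists>q. unif i * q = 1)"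
    unfolding unif_def by (rule someI_ex)
  then show "unif i \<in> B" "v i (unif i) = 1" "\<And>j. j \<in> {1..r}-{i} \<Longrightarrow> v j (unif i) = 0" by blast+
  obtain q where "unif i * q = 1" using u by blast
  then show "unif i * unif_inv i = 1" unfolding unif_inv_def by (rule someI)
qed

lemma val_unif_inv:
  assumes i: "i \<in> {1..r}" and j: "j \<in> {1..r}"
  shows "v j (unif_inv i) = ereal (if i = j then -1 else 0)"
proof -
  have "v j (unif_inv i) = - v j (unif i)" using dval.w_unit(2)[OF val[OF j] unif(4)[OF i]] .
  then show ?thesis using unif(2,3)[OF i] j by (cases "i = j") (auto simp: one_ereal_def)
qed

definition shift :: "nat set \<Rightarrow> (nat \<Rightarrow> nat) \<Rightarrow> 'a" where
  "shift A n = (\<Prod>i\<in>A. unif_inv i ^ n i)"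

lemma shift_inverse:
  assumes A: "A \<subseteq> {1..r}"
  shows "(\<Prod>i\<in>A. unif i ^ n i) * shift A n = 1"
proof -
  have "(\<Prod>i\<in>A. unif i ^ n i) * shift A n = (\<Prod>i\<in>A. (unif i * unif_inv i) ^ n i)"
    unfolding shift_def by (simp add: prod.distrib[symmetric] power_mult_distrib)
  also have "\<dots> = 1" using unif(4) A by (intro prod.neutral) auto
  finally show ?thesis .
qed

lemma val_shift:
  assumes A: "A \<subseteq> {1..r}" and j: "j \<in> {1..r}"
  shows "v j (shift A n) = ereal (if j \<in> A then - real (n j) else 0)"
proof -
  have finA: "finite A" using A finite_subset by blast
  have "v j (shift A n) = (\<Sum>i\<in>A. v j (unif_inv i ^ n i))"
    unfolding shift_def by (rule dval.w_prod[OF val[OF j] finA])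
  also have "\<dots> = (\<Sum>i\<in>A. ereal (real (n i) * (if i = j then -1 else 0)))"
    using dval.w_pow[OF val[OF j] val_unif_inv[OF _ j]] A by (intro sum.cong) auto
  also have "\<dots> = ereal (\<Sum>i\<in>A. real (n i) * (if i = j then -1 else 0))"
    by simp
  also have "(\<Sum>i\<in>A. real (n i) * (if i = j then -1 else 0)) = (if j \<in> A then - real (n j) else 0)"
    using finA by (simp add: if_distrib[of "\<lambda>x. real (n _) * x"] cong: if_cong)
  finally show ?thesis .
qed

lemma mult_shift_B:
  assumes A: "A \<subseteq> {1..r}" and z: "\<forall>j\<in>{1..r}. 0 \<le> v j z" and zA: "\<forall>i\<in>A. ereal (real (n i)) \<le> v i z"
  shows "z * shift A n \<in> B"
  unfolding B_iff
proof
  fix j assume j: "j \<in> {1..r}"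
  have vu: "v j (z * shift A n) = v j z + v j (shift A n)" using dval.w_mult[OF val[OF j]] by simp
  show "0 \<le> v j (z * shift A n)"
  proof (cases "j \<in> A")
    case True
    then show ?thesis using vu val_shift[OF A j] zA ereal_ge_shift by simp
  next
    case False
    then show ?thesis using vu val_shift[OF A j] z j by (simp add: zero_ereal_def[symmetric])
  qed
qed

definition val_ideal :: "nat set \<Rightarrow> (nat \<Rightarrow> nat) \<Rightarrow> 'a set" where
  "val_ideal A n = {z \<in> B. \<forall>i\<in>A. ereal (real (n i)) \<le> v i z}"

lemma val_ideal_ideal:
  assumes A: "A \<subseteq> {1..r}"
  shows "ideal_in B (val_ideal A n)"
  unfolding ideal_in_def
proof (intro conjI ballI)
  show "val_ideal A n \<subseteq> B" unfolding val_ideal_def by blast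
  show "0 \<in> val_ideal A n" unfolding val_ideal_def using B_0 dval.w_zero[OF val] A by auto
next
  fix a b assume a: "a \<in> val_ideal A n" and b: "b \<in> val_ideal A n"
  have "ereal (real (n i)) \<le> v i (a + b)" if i: "i \<in> A" for i
  proof -
    have "ereal (real (n i)) \<le> min (v i a) (v i b)" using a b i unfolding val_ideal_def by simp
    also have "\<dots> \<le> v i (a + b)" using dval.w_add[OF val] i A by blast
    finally show ?thesis .
  qed
  then show "a + b \<in> val_ideal A n" using a b B_add unfolding val_ideal_def by blast
next
  fix a s assume a: "a \<in> val_ideal A n" and s: "s \<in> B"
  have "ereal (real (n i)) \<le> v i (s * a)" if i: "i \<in> A" for i
  proof -
    have iI: "i \<in> {1..r}" using i A by blast
    have "0 + ereal (real (n i)) \<le> v i s + v i a" using a i B_nonneg[OF s iI] unfolding val_ideal_def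
      by (intro add_mono) auto
    then show ?thesis using dval.w_mult[OF val[OF iI]] by simp
  qed
  then show "s * a \<in> val_ideal A n" using a s B_mult unfolding val_ideal_def by blast
qed

lemma mm_pow_subset:
  assumes i: "i \<in> {1..r}"
  shows "ideal_pow B (mm i) k \<subseteq> val_ideal {i} (\<lambda>_. k)"
proof (induction k)
  case 0
  then show ?case using B_nonneg[OF _ i] by (auto simp: val_ideal_def zero_ereal_def[symmetric])
next
  case (Suc k)
  have "a * b \<in> val_ideal {i} (\<lambda>_. Suc k)" if ab: "a \<in> mm i" "b \<in> ideal_pow B (mm i) k" for a b
  proof -
    have b: "b \<in> B" "ereal (real k) \<le> v i b" using ab(2) Suc by (auto simp: val_ideal_def)
    have "ereal 1 + ereal (real k) \<le> v i a + v i b" using mm_ge1[OF ab(1) i] b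
      by (intro add_mono) (auto simp: one_ereal_def)
    then have "ereal (real (Suc k)) \<le> v i (a * b)" using dval.w_mult[OF val[OF i]] by simp
    moreover have "a * b \<in> B" using ab(1) b B_mult by (simp add: mm_iff)
    ultimately show ?thesis by (simp add: val_ideal_def)
  qed
  then show ?case unfolding ideal_pow.simps ideal_mult_def
    by (intro ideal_gen_least[OF val_ideal_ideal]) (use i in auto)
qed

lemma mprod_subset: "k \<le> r \<Longrightarrow> mprod B mm k n \<subseteq> val_ideal {1..k} n"
proof (induction k)
  case 0
  then show ?case by (simp add: val_ideal_def)
next
  case (Suc k)
  have kI: "Suc k \<in> {1..r}" using Suc by simp
  have "a * b \<in> val_ideal {1..Suc k} n"
    if ab: "a \<in> ideal_pow B (mm (Suc k)) (n (Suc k))" "b \<in> mprod B mm k n" for a b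
  proof -
    have a: "a \<in> B" "ereal (real (n (Suc k))) \<le> v (Suc k) a"
      using mm_pow_subset[OF kI] ab(1) by (auto simp: val_ideal_def)
    have b: "b \<in> B" "\<forall>i\<in>{1..k}. ereal (real (n i)) \<le> v i b"
      using Suc ab(2) by (auto simp: val_ideal_def)
    have "ereal (real (n i)) \<le> v i (a * b)" if i: "i \<in> {1..Suc k}" for i
    proof -
      have iI: "i \<in> {1..r}" using i Suc by auto
      have "ereal (real (n i)) \<le> v i a + v i b"
      proof (cases "i = Suc k")
        case True
        then show ?thesis using add_mono[OF a(2) B_nonneg[OF b(1) iI]] by simp
      next
        case False
        then show ?thesis using i b add_mono[OF B_nonneg[OF a(1) iI], of "ereal (real (n i))"] by auto
      qed
      then show ?thesis using dval.w_mult[OF val[OF iI]] by simp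
    qed
    then show ?thesis using a(1) b(1) B_mult by (simp add: val_ideal_def)
  qed
  then show ?case unfolding mprod.simps ideal_mult_def
    by (intro ideal_gen_least[OF val_ideal_ideal]) (use Suc.prems in auto)
qed

lemma monomial_mem_mprod:
  "k \<le> r \<Longrightarrow> u \<in> B \<Longrightarrow> (\<Prod>i\<in>{1..k}. unif i ^ n i) * u \<in> mprod B mm k n"
proof (induction k arbitrary: u)
  case (Suc k)
  have e: "(\<Prod>i\<in>{1..Suc k}. unif i ^ n i) * u = unif (Suc k) ^ n (Suc k) * ((\<Prod>i\<in>{1..k}. unif i ^ n i) * u)"
    by (simp add: algebra_simps)
  have "unif (Suc k) \<in> mm (Suc k)" using unif[of "Suc k"] Suc.prems by (simp add: mm_iff)
  then have "unif (Suc k) ^ n (Suc k) * 1 \<in> ideal_pow B (mm (Suc k)) (n (Suc k))"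
    using ideal_pow_mem B_1 by blast
  moreover have "(\<Prod>i\<in>{1..k}. unif i ^ n i) * u \<in> mprod B mm k n" using Suc by simp
  ultimately show ?case unfolding e mprod.simps by (simp add: ideal_mult_mem)
qed simp

lemma mprod_eq_val_ideal: "mprod B mm r n = val_ideal {1..r} n"
proof
  show "val_ideal {1..r} n \<subseteq> mprod B mm r n"
  proof
    fix z assume z: "z \<in> val_ideal {1..r} n"
    then have "z * shift {1..r} n \<in> B"
      using mult_shift_B[of "{1..r}" z n] B_nonneg by (simp add: val_ideal_def)
    then have mem: "(\<Prod>i\<in>{1..r}. unif i ^ n i) * (z * shift {1..r} n) \<in> mprod B mm r n"
      by (intro monomial_mem_mprod) simp_all
    have "(\<Prod>i\<in>{1..r}. unif i ^ n i) * (z * shift {1..r} n)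
        = z * ((\<Prod>i\<in>{1..r}. unif i ^ n i) * shift {1..r} n)"
      by (rule mult.left_commute)
    also have "\<dots> = z" using shift_inverse[of "{1..r}" n] by simp
    finally have eq: "z = (\<Prod>i\<in>{1..r}. unif i ^ n i) * (z * shift {1..r} n)" ..
    show "z \<in> mprod B mm r n" by (subst eq) (rule mem)
  qed
qed (rule mprod_subset, simp)

definition W :: "(nat \<Rightarrow> nat) \<Rightarrow> 'a set" where
  "W n = {z \<in> R0. \<forall>i\<in>{1..r}. ereal (real (n i)) \<le> v i z}"

lemma ell_W: "ell R0 F r v n = quot_dim F R0 (W n)"
proof -
  have "(\<lambda>i. val_max B (v i)) = mm" by (rule ext) (simp add: mm_def)
  moreover have "R0 \<inter> val_ideal {1..r} n = W n"
    unfolding val_ideal_def W_def using R0_B by auto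
  ultimately show ?thesis unfolding ell_def using mprod_eq_val_ideal by simp
qed

end

definition spans :: "'a::comm_ring_1 set \<Rightarrow> 'a set \<Rightarrow> 'a set \<Rightarrow> nat \<Rightarrow> (nat \<Rightarrow> 'a) \<Rightarrow> bool" where
  "spans F R N k b \<longleftrightarrow> (\<forall>j<k. b j \<in> R) \<and>
      (\<forall>z\<in>R. \<exists>c. (\<forall>j<k. c j \<in> F) \<and> z - (\<Sum>j<k. c j * b j) \<in> N)"

definition F_subspace :: "'a::comm_ring_1 set \<Rightarrow> 'a set \<Rightarrow> bool" where
  "F_subspace F N \<longleftrightarrow> 0 \<in> N \<and> (\<forall>a\<in>N. \<forall>b\<in>N. a + b \<in> N) \<and> (\<forall>c\<in>F. \<forall>a\<in>N. c * a \<in> N)"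

lemma quot_dim_spans: "quot_dim F R N = (LEAST k. \<exists>b. spans F R N k b)"
  unfolding quot_dim_def spans_def by simp

lemma quot_dim_le: "spans F R N k b \<Longrightarrow> quot_dim F R N \<le> k"
  unfolding quot_dim_spans by (auto intro: Least_le)

lemma quot_dim_spans_ex: "spans F R N k b \<Longrightarrow> \<exists>b. spans F R N (quot_dim F R N) b"
  unfolding quot_dim_spans by (rule LeastI_ex) blast

lemma spans_mono: "spans F R N k b \<Longrightarrow> N \<subseteq> N' \<Longrightarrow> spans F R N' k b"
  unfolding spans_def by blast

lemma subfield_closed:
  assumes "subfield F"
  shows "0 \<in> F" "1 \<in> F" "\<And>a b. a \<in> F \<Longrightarrow> b \<in> F \<Longrightarrow> a + b \<in> F"
    "\<And>a b. a \<in> F \<Longrightarrow> b \<in> F \<Longrightarrow> a * b \<in> F" "\<And>a. a \<in> F \<Longrightarrow> - a \<in> F"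
    "\<And>a. a \<in> F \<Longrightarrow> a \<noteq> 0 \<Longrightarrow> \<exists>b\<in>F. a * b = 1"
  using assms unfolding subfield_def subring_def by blast+

lemma F_subspace_diff:
  assumes F: "subfield F" and N: "F_subspace F N" and ab: "a \<in> N" "b \<in> N"
  shows "a - b \<in> N"
proof -
  have "(- 1) * b \<in> N" using N ab(2) subfield_closed(2,5)[OF F] unfolding F_subspace_def by blast
  then show ?thesis using N ab(1) unfolding F_subspace_def by (metis diff_conv_add_uminus mult_minus1)
qed

lemma spans_extend:
  assumes sp: "spans F R N k b" and z: "z \<in> R" and h: "\<forall>w\<in>N. \<exists>c\<in>F. w - c * z \<in> N'"
  shows "spans F R N' (Suc k) (b(k := z))"
  unfolding spans_def
proof (intro conjI allI impI ballI)
  fix j assume "j < Suc k" then show "(b(k := z)) j \<in> R" using sp z unfolding spans_def by auto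
next
  fix z0 assume z0: "z0 \<in> R"
  obtain c where c: "\<forall>j<k. c j \<in> F" "z0 - (\<Sum>j<k. c j * b j) \<in> N" using sp z0 unfolding spans_def by blast
  obtain c' where c': "c' \<in> F" "z0 - (\<Sum>j<k. c j * b j) - c' * z \<in> N'" using h c by blast
  have "(\<Sum>j<Suc k. (c(k := c')) j * (b(k := z)) j) = (\<Sum>j<k. c j * b j) + c' * z"
    by simp
  then have "z0 - (\<Sum>j<Suc k. (c(k := c')) j * (b(k := z)) j) \<in> N'" using c'(2) by (simp only: diff_diff_eq)
  moreover have "\<forall>j<Suc k. (c(k := c')) j \<in> F" using c c' by auto
  ultimately show "\<exists>c. (\<forall>j<Suc k. c j \<in> F) \<and> z0 - (\<Sum>j<Suc k. c j * (b(k := z)) j) \<in> N'"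
    by blast
qed

text \<open>The transposition of two indices, used to move a chosen index to the last position.\<close>
definition swap_idx :: "nat \<Rightarrow> nat \<Rightarrow> nat \<Rightarrow> nat" where
  "swap_idx a b j = (if j = a then b else if j = b then a else j)"

lemma sum_swap_idx: assumes "a < k" "b < k" shows "(\<Sum>j<k. f (swap_idx a b j)) = (\<Sum>j<k. f j)"
  by (rule sum.reindex_bij_witness[where i = "swap_idx a b" and j = "swap_idx a b"])
    (use assms in \<open>auto simp: swap_idx_def\<close>)

lemma spans_swap:
  assumes sp: "spans F R N k b" and ab: "a < k" "a' < k"
  shows "spans F R N k (b \<circ> swap_idx a a')"
  unfolding spans_def
proof (intro conjI allI impI ballI)
  fix j assume "j < k" then show "(b \<circ> swap_idx a a') j \<in> R" using sp ab unfolding spans_def swap_idx_def by auto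
next
  fix z assume z: "z \<in> R"
  obtain c where c: "\<forall>j<k. c j \<in> F" "z - (\<Sum>j<k. c j * b j) \<in> N" using sp z unfolding spans_def by blast
  have "(\<Sum>j<k. (c \<circ> swap_idx a a') j * (b \<circ> swap_idx a a') j) = (\<Sum>j<k. c j * b j)"
    using sum_swap_idx[OF ab, of "\<lambda>j. c j * b j"] by simp
  moreover have "\<forall>j<k. (c \<circ> swap_idx a a') j \<in> F" using c ab by (auto simp: swap_idx_def)
  ultimately show "\<exists>c. (\<forall>j<k. c j \<in> F) \<and> z - (\<Sum>j<k. c j * (b \<circ> swap_idx a a') j) \<in> N"
    using c by metis
qed

lemma spans_drop_last:
  assumes F: "subfield F" and N: "F_subspace F N" and sp: "spans F R N (Suc K) b"
    and c: "\<forall>j<Suc K. c j \<in> F" and cK: "c K \<noteq> 0" and cN: "(\<Sum>j<Suc K. c j * b j) \<in> N"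
  shows "spans F R N K b"
  unfolding spans_def
proof (intro conjI allI impI ballI)
  fix j assume "j < K" then show "b j \<in> R" using sp unfolding spans_def by auto
next
  fix z assume z: "z \<in> R"
  obtain d where d: "\<forall>j<Suc K. d j \<in> F" "z - (\<Sum>j<Suc K. d j * b j) \<in> N"
    using sp z unfolding spans_def by blast
  obtain e where e: "e \<in> F" "c K * e = 1" using subfield_closed(6)[OF F] c cK by blast
  define t where "t = d K * e"
  define d' where "d' j = d j - t * c j" for j
  have tF: "t \<in> F" unfolding t_def using subfield_closed(4)[OF F] d e by simp
  have "t * (\<Sum>j<Suc K. c j * b j) \<in> N" using N tF cN unfolding F_subspace_def by blast
  then have mem: "(z - (\<Sum>j<Suc K. d j * b j)) + t * (\<Sum>j<Suc K. c j * b j) \<in> N"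
    using N d unfolding F_subspace_def by blast
  have tK: "t * (c K * b K) = d K * b K"
  proof -
    have "t * (c K * b K) = d K * b K * (c K * e)" unfolding t_def by (simp add: ac_simps)
    then show ?thesis using e by simp
  qed
  have D': "(\<Sum>j<K. d' j * b j) = (\<Sum>j<K. d j * b j) - t * (\<Sum>j<K. c j * b j)"
    unfolding d'_def by (simp add: sum_subtractf sum_distrib_left algebra_simps)
  have "z - (\<Sum>j<K. d' j * b j)
      = (z - ((\<Sum>j<K. d j * b j) + d K * b K)) + (t * (\<Sum>j<K. c j * b j) + d K * b K)"
    using D' by (simp add: algebra_simps)
  also have "\<dots> = (z - (\<Sum>j<Suc K. d j * b j)) + t * (\<Sum>j<Suc K. c j * b j)"
    using tK by (simp add: distrib_left)
  finally have eq: "z - (\<Sum>j<K. d' j * b j)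
      = (z - (\<Sum>j<Suc K. d j * b j)) + t * (\<Sum>j<Suc K. c j * b j)" .
  have "z - (\<Sum>j<K. d' j * b j) \<in> N" by (subst eq) (rule mem)
  moreover have "d' j \<in> F" if "j < K" for j
  proof -
    have "d j \<in> F" "t * c j \<in> F" using d c tF that subfield_closed(4)[OF F] by auto
    then show ?thesis unfolding d'_def using subfield_closed(3,5)[OF F] by (metis diff_conv_add_uminus)
  qed
  ultimately show "\<exists>c. (\<forall>j<K. c j \<in> F) \<and> z - (\<Sum>j<K. c j * b j) \<in> N" by blast
qed

lemma spans_minimal_indep:
  assumes F: "subfield F" and N: "F_subspace F N" and sp: "spans F R N k b" and k: "quot_dim F R N = k"
    and c: "\<forall>j<k. c j \<in> F" and cN: "(\<Sum>j<k. c j * b j) \<in> N"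
  shows "\<forall>j<k. c j = 0"
proof (rule ccontr)
  assume "\<not> (\<forall>j<k. c j = 0)"
  then obtain m where m: "m < k" "c m \<noteq> 0" by blast
  then obtain K where K: "k = Suc K" by (cases k) auto
  have mK: "m < Suc K" "K < Suc K" using m K by auto
  let ?\<sigma> = "swap_idx m K"
  have "(\<Sum>j<Suc K. (c \<circ> ?\<sigma>) j * (b \<circ> ?\<sigma>) j) = (\<Sum>j<Suc K. c j * b j)"
    using sum_swap_idx[OF mK, of "\<lambda>j. c j * b j"] by simp
  then have "spans F R N K (b \<circ> ?\<sigma>)"
    using spans_drop_last[OF F N spans_swap[OF sp[unfolded K] mK], of "c \<circ> ?\<sigma>"] c cN K m
    by (auto simp: swap_idx_def)
  then show False using quot_dim_le k K by fastforce
qed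

lemma quot_dim_Suc:
  assumes F: "subfield F" and N: "F_subspace F N" and sub: "N' \<subseteq> N" and NR: "N \<subseteq> R"
    and z: "z \<in> N" "z \<notin> N'" and h: "\<forall>w\<in>N. \<exists>c\<in>F. w - c * z \<in> N'"
    and fin: "spans F R N k0 b0"
  shows "quot_dim F R N' = Suc (quot_dim F R N)"
proof -
  define k where "k = quot_dim F R N"
  obtain b where b: "spans F R N k b" using quot_dim_spans_ex[OF fin] unfolding k_def by blast
  have zR: "z \<in> R" using z NR by blast
  have sp': "spans F R N' (Suc k) (b(k := z))" by (rule spans_extend[OF b zR h])
  define k' where "k' = quot_dim F R N'"
  obtain b' where b': "spans F R N' k' b'" using quot_dim_spans_ex[OF sp'] unfolding k'_def by blast
  have "k' \<le> Suc k" unfolding k'_def using quot_dim_le[OF sp'] .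
  moreover have b'N: "spans F R N k' b'" using spans_mono[OF b' sub] .
  then have "k \<le> k'" unfolding k_def by (rule quot_dim_le)
  moreover have "k' \<noteq> k"
  proof
    assume kk: "k' = k"
    obtain c where c: "\<forall>j<k'. c j \<in> F" "z - (\<Sum>j<k'. c j * b' j) \<in> N'"
      using b' zR unfolding spans_def by blast
    have "z - (z - (\<Sum>j<k'. c j * b' j)) \<in> N" using F_subspace_diff[OF F N] z c sub by blast
    then have "(\<Sum>j<k'. c j * b' j) \<in> N" by simp
    then have "\<forall>j<k'. c j = 0" using spans_minimal_indep[OF F N b'N _ c(1)] kk k_def by blast
    then show False using c z by simp
  qed
  ultimately show ?thesis unfolding k_def k'_def by simp
qed

context setting
begin

lemma W_R0: "W n \<subseteq> R0"
  unfolding W_def by blast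

lemma W_subspace: "F_subspace F (W n)"
  unfolding F_subspace_def
proof (intro conjI ballI)
  show "0 \<in> W n" unfolding W_def using dval.w_zero[OF val] by simp
next
  fix a b assume a: "a \<in> W n" and b: "b \<in> W n"
  have "ereal (real (n i)) \<le> v i (a + b)" if i: "i \<in> {1..r}" for i
  proof -
    have "ereal (real (n i)) \<le> min (v i a) (v i b)" using a b i unfolding W_def by simp
    also have "\<dots> \<le> v i (a + b)" by (rule dval.w_add[OF val[OF i]])
    finally show ?thesis .
  qed
  then show "a + b \<in> W n" using a b unfolding W_def by simp
next
  fix c a assume c: "c \<in> F" and a: "a \<in> W n"
  have "ereal (real (n i)) \<le> v i (c * a)" if i: "i \<in> {1..r}" for i
  proof -
    have "0 + ereal (real (n i)) \<le> v i c + v i a"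
      using a i R0_nonneg[OF _ i, of c] c F_R0 unfolding W_def by (intro add_mono) auto
    then show ?thesis using dval.w_mult[OF val[OF i]] by simp
  qed
  then show "c * a \<in> W n" using a c F_R0 unfolding W_def by auto
qed

lemma W_Suc_iff:
  assumes i: "i \<in> {1..r}"
  shows "z \<in> W (m(i := Suc (m i))) \<longleftrightarrow> z \<in> W m \<and> v i z \<noteq> ereal (real (m i))"
proof
  assume z: "z \<in> W (m(i := Suc (m i)))"
  have "ereal (real (m j)) \<le> v j z" if j: "j \<in> {1..r}" for j
  proof -
    have "ereal (real (m j)) \<le> ereal (real ((m(i := Suc (m i))) j))" by simp
    also have "\<dots> \<le> v j z" using z j unfolding W_def by blast
    finally show ?thesis .
  qed
  moreover have "ereal (real (Suc (m i))) \<le> v i z" using z i unfolding W_def by fastforce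
  ultimately show "z \<in> W m \<and> v i z \<noteq> ereal (real (m i))" using z unfolding W_def by auto
next
  assume z: "z \<in> W m \<and> v i z \<noteq> ereal (real (m i))"
  then have "ereal (real (m i)) \<le> v i z" using i unfolding W_def by blast
  then have "ereal (real (m i)) < v i z" using z by (metis order_less_le)
  then have "ereal (real (Suc (m i))) \<le> v i z" by (rule dval.w_int_succ[OF val[OF i]])
  then show "z \<in> W (m(i := Suc (m i)))" using z unfolding W_def by auto
qed

lemma residue_quotient:
  assumes i: "i \<in> {1..r}" and a: "a \<in> B" and b: "b \<in> B" "v i b = 0"
  shows "\<exists>c\<in>F. 0 < v i (a - c * b)"
proof -
  obtain ca where ca: "ca \<in> F" "a - ca \<in> mm i" using residue_const[OF i a] .
  obtain cb where cb: "cb \<in> F" "b - cb \<in> mm i" using residue_const[OF i b(1)] .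
  have "cb \<noteq> 0" using cb b by (auto simp: mm_iff)
  then obtain cb' where cb': "cb' \<in> F" "cb * cb' = 1" using F_inverse cb by blast
  define c where "c = ca * cb'"
  have cF: "c \<in> F" unfolding c_def using ca cb' by simp
  have "c * cb = ca" unfolding c_def using cb' by (metis mult.assoc mult.commute mult_1_right)
  then have eq: "a - c * b = (a - ca) - c * (b - cb)" by (simp add: algebra_simps)
  have "0 < v i (c * (b - cb))"
    using dval.w_mult[OF val[OF i]] R0_nonneg[OF _ i, of c] cF F_R0 cb ereal_pos_add
    by (auto simp: mm_iff)
  moreover have "0 < v i (a - ca)" using ca by (simp add: mm_iff)
  ultimately have "0 < min (v i (a - ca)) (v i (c * (b - cb)))" by simp
  also have "\<dots> \<le> v i (a - c * b)" unfolding eq by (rule dval.w_diff[OF val[OF i]])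
  finally show ?thesis using cF by blast
qed

lemma W_Suc_spanned:
  assumes i: "i \<in> {1..r}" and z: "z \<in> W m" "v i z = ereal (real (m i))" and w: "w \<in> W m"
  shows "\<exists>c\<in>F. w - c * z \<in> W (m(i := Suc (m i)))"
proof -
  define P where "P = unif i ^ m i"
  define Q where "Q = shift {i} m"
  have PQ: "P * Q = 1" using shift_inverse[of "{i}" m] i unfolding P_def Q_def by simp
  have vQ: "v i Q = ereal (- real (m i))" using val_shift[of "{i}" i m] i unfolding Q_def by simp
  have vP: "v i P = ereal (real (m i))"
    unfolding P_def using dval.w_pow[OF val[OF i], of "unif i" 1] unif(2)[OF i] by (simp add: one_ereal_def)
  have shift_B: "x * Q \<in> B" if "x \<in> W m" for x
    unfolding Q_def by (rule mult_shift_B) (use that i R0_nonneg in \<open>auto simp: W_def\<close>)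
  have "v i (z * Q) = 0" using dval.w_mult[OF val[OF i]] z(2) vQ by simp
  then obtain c where cF: "c \<in> F" and pos: "0 < v i (w * Q - c * (z * Q))"
    using residue_quotient[OF i shift_B[OF w] shift_B[OF z(1)]] by blast
  have "(w * Q - c * (z * Q)) * P = (w - c * z) * (P * Q)" by (simp add: algebra_simps)
  then have "w - c * z = (w * Q - c * (z * Q)) * P" using PQ by simp
  then have "v i (w - c * z) = v i (w * Q - c * (z * Q)) + ereal (real (m i))"
    using dval.w_mult[OF val[OF i]] vP by simp
  then have "ereal (real (m i)) < v i (w - c * z)" using pos by (cases "v i (w * Q - c * (z * Q))") auto
  moreover have "c * z \<in> W m" using W_subspace cF z(1) unfolding F_subspace_def by blast
  then have "w - c * z \<in> W m" using F_subspace_diff[OF F_subfield W_subspace w] by blast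
  ultimately have "w - c * z \<in> W (m(i := Suc (m i)))" using W_Suc_iff[OF i] by simp
  then show ?thesis using cF by blast
qed

lemma W_finite_codim: "\<exists>k b. spans F R0 (W m) k b"
proof (induction "sum m {1..r}" arbitrary: m)
  case 0
  then have "\<forall>i\<in>{1..r}. m i = 0" by simp
  then have "W m = R0" unfolding W_def using R0_nonneg by (auto simp: zero_ereal_def[symmetric])
  then have "spans F R0 (W m) 0 (\<lambda>_. 0)" unfolding spans_def by simp
  then show ?case by blast
next
  case (Suc s)
  then obtain i where i: "i \<in> {1..r}" "m i > 0" by (metis sum.neutral gr0I nat.distinct(1))
  define m' where "m' = m(i := m i - 1)"
  have m_eq: "m = m'(i := Suc (m' i))" unfolding m'_def using i by auto
  have "sum m {1..r} = m i + sum m ({1..r} - {i})" "sum m' {1..r} = m' i + sum m' ({1..r} - {i})"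
    using i by (simp_all add: sum.remove)
  moreover have "sum m' ({1..r} - {i}) = sum m ({1..r} - {i})" unfolding m'_def by (intro sum.cong) auto
  ultimately have "sum m {1..r} = Suc (sum m' {1..r})" using i unfolding m'_def by simp
  then have "s = sum m' {1..r}" using Suc.hyps(2) by simp
  then obtain k b where kb: "spans F R0 (W m') k b" using Suc.hyps(1) by blast
  show ?case
  proof (cases "\<exists>z\<in>W m'. v i z = ereal (real (m' i))")
    case True
    then obtain z where z: "z \<in> W m'" "v i z = ereal (real (m' i))" by blast
    have "\<forall>w\<in>W m'. \<exists>c\<in>F. w - c * z \<in> W m"
      using W_Suc_spanned[OF i(1) z] by (simp add: m_eq[symmetric])
    moreover have "z \<in> R0" using z(1) W_R0 by blast
    ultimately show ?thesis using spans_extend[OF kb] by blast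
  next
    case False
    then have "W m = W m'" unfolding m_eq using W_Suc_iff[OF i(1)] by blast
    then show ?thesis using kb by auto
  qed
qed

lemma quot_dim_W_Suc:
  assumes i: "i \<in> {1..r}"
  shows "quot_dim F R0 (W (m(i := Suc (m i)))) =
    quot_dim F R0 (W m) + (if \<exists>z\<in>W m. v i z = ereal (real (m i)) then 1 else 0)"
proof (cases "\<exists>z\<in>W m. v i z = ereal (real (m i))")
  case True
  then obtain z where z: "z \<in> W m" "v i z = ereal (real (m i))" by blast
  obtain k b where fin: "spans F R0 (W m) k b" using W_finite_codim by blast
  have "quot_dim F R0 (W (m(i := Suc (m i)))) = Suc (quot_dim F R0 (W m))"
  proof (rule quot_dim_Suc[OF F_subfield W_subspace _ W_R0 z(1) _ _ fin])
    show "W (m(i := Suc (m i))) \<subseteq> W m" "z \<notin> W (m(i := Suc (m i)))" using W_Suc_iff[OF i] z by auto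
    show "\<forall>w\<in>W m. \<exists>c\<in>F. w - c * z \<in> W (m(i := Suc (m i)))" using W_Suc_spanned[OF i z] by blast
  qed
  then show ?thesis using True by simp
next
  case False
  then have "W (m(i := Suc (m i))) = W m" using W_Suc_iff[OF i] by blast
  then show ?thesis using False by simp
qed

end

context setting
begin

abbreviation "S \<equiv> value_semigroup R0 r v"

lemma S_elem: "\<beta> \<in> S \<Longrightarrow> \<exists>z\<in>R0. z \<noteq> 0 \<and> (\<forall>j\<in>{1..r}. v j z = ereal (real (\<beta> j)))"
  unfolding value_semigroup_def by blast

text \<open>An element of \<open>R0\<close> with positive value somewhere is not a unit of \<open>R0\<close>, and conversely
  (by residue degree one) every non-unit of \<open>R0\<close> has positive value everywhere.\<close>
lemma pos_val_nonunit:
  assumes z: "z \<in> R0" and j: "j \<in> {1..r}" and pos: "0 < v j z"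
  shows "z \<in> max_ideal R0"
proof -
  have "z \<notin> units_in R0"
  proof
    assume "z \<in> units_in R0"
    then obtain y where y: "y \<in> R0" "z * y = 1" by (auto simp: units_in_def)
    then have "v j z + v j y = 0" using dval.w_mult[OF val[OF j], of z y] dval.w_one[OF val[OF j]] by simp
    then show False using ereal_pos_add[OF R0_nonneg[OF y(1) j] pos] by (simp add: add.commute)
  qed
  then show ?thesis using z by (simp add: max_ideal_def)
qed

lemma max_ideal_pos:
  assumes z: "z \<in> max_ideal R0" and j: "j \<in> {1..r}"
  shows "0 < v j z"
proof -
  have zR: "z \<in> R0" using z by (simp add: max_ideal_def)
  obtain c where c: "c \<in> F" "z - c \<in> mm j" using residue_const[OF j] zR R0_B by blast
  have "c = 0"
  proof (rule ccontr)
    assume "c \<noteq> 0"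
    then obtain c' where c': "c' \<in> F" "c * c' = 1" using F_inverse c by blast
    have "z - c \<in> max_ideal R0"
      using pos_val_nonunit[of "z - c" j] zR c F_R0 j by (auto simp: mm_iff)
    moreover have M: "ideal_in R0 (max_ideal R0)" using R0_local by (simp add: local_ring_def)
    moreover have "- 1 \<in> R0" by simp
    ultimately have "(- 1) * (z - c) \<in> max_ideal R0" unfolding ideal_in_def by blast
    then have "z + (- 1) * (z - c) \<in> max_ideal R0" using z M unfolding ideal_in_def by blast
    moreover have "c \<in> units_in R0" using c c' F_R0 by (auto simp: units_in_def)
    ultimately show False by (simp add: max_ideal_def)
  qed
  then show ?thesis using c by (simp add: mm_iff)
qed

text \<open>The Cohen--Macaulay hypothesis provides a regular non-unit; it has positive finite
  value at every place.\<close>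
lemma regular_elem: "\<exists>s\<in>R0. \<forall>j\<in>{1..r}. 1 \<le> v j s \<and> v j s \<noteq> \<infinity>"
proof -
  obtain s where s: "s \<in> max_ideal R0" "nonzerodivisor_in R0 s"
    using O_CM by (auto simp: one_dim_CM_local_def)
  obtain s' where s': "s * s' = 1" using nonzerodivisor_inverse s(2) by blast
  have "1 \<le> v j s \<and> v j s \<noteq> \<infinity>" if j: "j \<in> {1..r}" for j
    using dval.w_unit(1)[OF val[OF j] s'] dval.w_pos_ge1[OF val[OF j] max_ideal_pos[OF s(1) j]] by blast
  moreover have "s \<in> R0" using s by (simp add: max_ideal_def)
  ultimately show ?thesis by blast
qed

lemma regular_perturbation:
  assumes z: "z \<in> R0"
  shows "\<exists>z'\<in>R0. \<forall>j\<in>{1..r}. v j z' \<noteq> \<infinity> \<and> (v j z \<noteq> \<infinity> \<longrightarrow> v j z' = v j z)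
           \<and> min (v j z) (ereal (real N)) \<le> v j z'"
proof -
  obtain s where s: "s \<in> R0" "\<forall>j\<in>{1..r}. 1 \<le> v j s \<and> v j s \<noteq> \<infinity>" using regular_elem by blast
  define fv where "fv j = (if v j z = \<infinity> then 0 else val_nat (v j z))" for j
  define M where "M = Suc (N + (\<Sum>j\<in>{1..r}. fv j))"
  have M_big: "v j z < ereal (real M)" if j: "j \<in> {1..r}" and fin: "v j z \<noteq> \<infinity>" for j
  proof -
    have "fv j \<le> (\<Sum>j\<in>{1..r}. fv j)" by (rule member_le_sum) (use j in auto)
    then have lt: "val_nat (v j z) < M" using fin unfolding M_def fv_def by simp
    have eq: "v j z = ereal (real (val_nat (v j z)))"
      using dval.w_val_nat[OF val[OF j] R0_nonneg[OF z j] fin] .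
    show ?thesis using lt by (subst eq) simp
  qed
  have "v j (z + s ^ M) \<noteq> \<infinity> \<and> (v j z \<noteq> \<infinity> \<longrightarrow> v j (z + s ^ M) = v j z)
      \<and> min (v j z) (ereal (real N)) \<le> v j (z + s ^ M)" if j: "j \<in> {1..r}" for j
  proof -
    have s_j: "1 \<le> v j s" "v j s \<noteq> \<infinity>" using s j by auto
    note p = dval.w_perturb[OF val[OF j] s_j M_big[OF j]]
    have "N \<le> M" unfolding M_def by simp
    then have "ereal (real N) \<le> ereal (real M)" by simp
    then have "min (v j z) (ereal (real N)) \<le> min (v j z) (ereal (real M))" by (rule min.mono[OF order_refl])
    then show ?thesis using p by (blast intro: order_trans)
  qed
  moreover have "z + s ^ M \<in> R0" using z s by simp
  ultimately show ?thesis by blast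
qed

lemma realize:
  assumes z: "z \<in> R0" and A: "A \<subseteq> {1..r}"
    and on_A: "\<forall>j\<in>A. v j z = ereal (real (\<beta> j))"
    and off_A: "\<forall>j\<in>{1..r}-A. ereal (real (\<gamma> j)) \<le> v j z"
  shows "\<exists>\<delta>\<in>S. (\<forall>j\<in>A. \<delta> j = \<beta> j) \<and> (\<forall>j\<in>{1..r}-A. \<gamma> j \<le> \<delta> j)"
proof -
  define N where "N = (\<Sum>j\<in>{1..r}. \<gamma> j)"
  obtain z' where z'R: "z' \<in> R0" and pert: "\<And>j. j \<in> {1..r} \<Longrightarrow> v j z' \<noteq> \<infinity>"
    "\<And>j. j \<in> {1..r} \<Longrightarrow> v j z \<noteq> \<infinity> \<Longrightarrow> v j z' = v j z"
    "\<And>j. j \<in> {1..r} \<Longrightarrow> min (v j z) (ereal (real N)) \<le> v j z'"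
    using regular_perturbation[OF z, of N] by blast
  define \<delta> where "\<delta> j = (if j \<in> {1..r} then val_nat (v j z') else 0)" for j
  have v\<delta>: "v j z' = ereal (real (\<delta> j))" if j: "j \<in> {1..r}" for j
    unfolding \<delta>_def using j dval.w_val_nat[OF val[OF j] R0_nonneg[OF z'R j] pert(1)[OF j]] by simp
  have "1 \<in> {1..r}" using r_ge2 by simp
  then have "z' \<noteq> 0" using pert(1) dval.w_zero[OF val] by metis
  then have "\<delta> \<in> S" unfolding value_semigroup_def vecs_def using z'R v\<delta> by (auto simp: \<delta>_def)
  moreover have "\<delta> j = \<beta> j" if j: "j \<in> A" for j
  proof -
    have jI: "j \<in> {1..r}" using j A by blast
    have "ereal (real (\<delta> j)) = ereal (real (\<beta> j))" using v\<delta>[OF jI] pert(2)[OF jI] on_A j by simp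
    then show ?thesis by simp
  qed
  moreover have "\<gamma> j \<le> \<delta> j" if j: "j \<in> {1..r}-A" for j
  proof -
    have jI: "j \<in> {1..r}" using j by blast
    have "\<gamma> j \<le> N" unfolding N_def by (rule member_le_sum) (use jI in auto)
    then have "ereal (real (\<gamma> j)) \<le> min (v j z) (ereal (real N))" using off_A j by simp
    also have "\<dots> \<le> ereal (real (\<delta> j))" using pert(3)[OF jI] v\<delta>[OF jI] by simp
    finally show ?thesis by simp
  qed
  ultimately show ?thesis by blast
qed

text \<open>For fixed \<open>z\<close> and \<open>w\<close> with \<open>v_i w = n_i\<close>, at most one constant \<open>c\<close> raises the value of
  \<open>z + c w\<close> above \<open>n_i\<close>: two such would give \<open>v_i ((c_1 - c_2) w) > n_i\<close>.\<close>
lemma unique_cancelling_coeff: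
  assumes i: "i \<in> {1..r}" and w: "v i w = ereal (real k)"
  shows "card {c \<in> F. ereal (real k) < v i (z + c * w)} \<le> 1"
proof -
  have "c1 = c2" if c1: "c1 \<in> {c \<in> F. ereal (real k) < v i (z + c * w)}"
    and c2: "c2 \<in> {c \<in> F. ereal (real k) < v i (z + c * w)}" for c1 c2
  proof (rule ccontr)
    assume ne: "c1 \<noteq> c2"
    have "ereal (real k) < min (v i (z + c1 * w)) (v i (z + c2 * w))" using c1 c2 by simp
    also have "\<dots> \<le> v i ((z + c1 * w) - (z + c2 * w))" by (rule dval.w_diff[OF val[OF i]])
    also have "(z + c1 * w) - (z + c2 * w) = (c1 - c2) * w" by (simp add: algebra_simps)
    also have "v i ((c1 - c2) * w) = ereal (real k)"
      using val_const_mult[of "c1 - c2" i w] c1 c2 ne w i by simp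
    finally show False by simp
  qed
  moreover have "finite {c \<in> F. ereal (real k) < v i (z + c * w)}" using F_finite by simp
  ultimately show ?thesis by (simp add: card_le_Suc0_iff_eq)
qed

text \<open>Since \<open>F\<close> has more than \<open>\<sharp>J + 1\<close> elements, some non-zero constant cancels at no place of \<open>J\<close>.\<close>
lemma good_coeff:
  assumes J: "J \<subseteq> {1..r}" and card: "card J + 1 < card F"
    and w: "\<forall>i\<in>J. v i w = ereal (real (n i))"
  shows "\<exists>c\<in>F. c \<noteq> 0 \<and> (\<forall>i\<in>J. \<not> ereal (real (n i)) < v i (z + c * w))"
proof -
  define bad where "bad i = {c \<in> F. ereal (real (n i)) < v i (z + c * w)}" for i
  define X where "X = insert 0 (\<Union>i\<in>J. bad i)"
  have XF: "X \<subseteq> F" unfolding X_def bad_def by auto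
  have finJ: "finite J" using J finite_subset by blast
  have "card (\<Union>i\<in>J. bad i) \<le> (\<Sum>i\<in>J. card (bad i))" by (rule card_UN_le[OF finJ])
  also have "\<dots> \<le> of_nat (card J) * 1"
  proof (rule sum_bounded_above)
    fix i assume i: "i \<in> J"
    show "card (bad i) \<le> 1" unfolding bad_def
      by (rule unique_cancelling_coeff) (use i J w in auto)
  qed
  finally have "card (\<Union>i\<in>J. bad i) \<le> card J" by simp
  moreover have "card X \<le> Suc (card (\<Union>i\<in>J. bad i))" unfolding X_def by (rule card_insert_le_m1) simp_all
  ultimately have "card X < card F" using card by simp
  then have "X \<noteq> F" by auto
  then obtain c where "c \<in> F" "c \<notin> X" using XF by blast
  then show ?thesis unfolding X_def bad_def by blast
qed

end

context setting
begin

lemma combination_values: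
  assumes J1: "J1 \<subseteq> {1..r}" and J2: "J2 \<subseteq> {1..r}"
    and b: "\<beta> \<in> Delta R0 r v J1 n" and g: "\<gamma> \<in> Delta R0 r v J2 n"
    and z: "\<forall>j\<in>{1..r}. v j z = ereal (real (\<beta> j))" and w: "\<forall>j\<in>{1..r}. v j w = ereal (real (\<gamma> j))"
    and c: "c \<in> F" "c \<noteq> 0" "\<forall>i\<in>J1 \<inter> J2. \<not> ereal (real (n i)) < v i (z + c * w)"
  shows "\<forall>j\<in>J1 \<union> J2. v j (z + c * w) = ereal (real (n j))"
    and "\<forall>j\<in>{1..r} - (J1 \<union> J2). ereal (real (Suc (n j))) \<le> v j (z + c * w)"
proof -
  have b': "\<forall>i\<in>J1. \<beta> i = n i" "\<forall>t\<in>{1..r}-J1. n t < \<beta> t" using b unfolding Delta_def by auto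
  have g': "\<forall>i\<in>J2. \<gamma> i = n i" "\<forall>t\<in>{1..r}-J2. n t < \<gamma> t" using g unfolding Delta_def by auto
  have vcw: "v j (c * w) = ereal (real (\<gamma> j))" if "j \<in> {1..r}" for j
    using val_const_mult[OF c(1,2) that] w that by simp
  have "v j (z + c * w) = ereal (real (n j))" if j: "j \<in> J1 \<union> J2" for j
  proof -
    have jI: "j \<in> {1..r}" using j J1 J2 by auto
    consider "j \<in> J1 \<inter> J2" | "j \<in> J1 - J2" | "j \<in> J2 - J1" using j by blast
    then show ?thesis
    proof cases
      case 1
      have "ereal (real (n j)) \<le> min (v j z) (v j (c * w))" using z b' g' 1 jI vcw by simp
      also have "\<dots> \<le> v j (z + c * w)" by (rule dval.w_add[OF val[OF jI]])
      finally show ?thesis using c(3) 1 by (simp add: order_le_less)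
    next
      case 2
      then have "v j z < v j (c * w)" using z b' g' jI vcw by simp
      then show ?thesis using dval.w_strict[OF val[OF jI]] z jI b' 2 by simp
    next
      case 3
      then have "v j (c * w) < v j z" using z b' g' jI vcw by simp
      then show ?thesis using dval.w_strict[OF val[OF jI], of "c * w" z] vcw[OF jI] g' 3
        by (simp add: add.commute)
    qed
  qed
  then show "\<forall>j\<in>J1 \<union> J2. v j (z + c * w) = ereal (real (n j))" by blast
  have "ereal (real (Suc (n j))) \<le> v j (z + c * w)" if j: "j \<in> {1..r} - (J1 \<union> J2)" for j
  proof -
    have "n j < \<beta> j" "n j < \<gamma> j" using b'(2) g'(2) j by blast+
    then have "Suc (n j) \<le> \<beta> j" "Suc (n j) \<le> \<gamma> j" by simp_all
    then have "ereal (real (Suc (n j))) \<le> min (v j z) (v j (c * w))" using z w j vcw by simp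
    also have "\<dots> \<le> v j (z + c * w)" using j by (intro dval.w_add[OF val]) simp
    finally show ?thesis .
  qed
  then show "\<forall>j\<in>{1..r} - (J1 \<union> J2). ereal (real (Suc (n j))) \<le> v j (z + c * w)" by blast
qed

lemma Delta_union:
  assumes J1: "J1 \<subseteq> {1..r}" and J2: "J2 \<subseteq> {1..r}"
    and b: "\<beta> \<in> Delta R0 r v J1 n" and g: "\<gamma> \<in> Delta R0 r v J2 n"
    and card: "card (J1 \<inter> J2) + 1 < card F"
  shows "Delta R0 r v (J1 \<union> J2) n \<noteq> {}"
proof -
  obtain z where z: "z \<in> R0" "\<forall>j\<in>{1..r}. v j z = ereal (real (\<beta> j))"
    using S_elem b unfolding Delta_def by blast
  obtain w where w: "w \<in> R0" "\<forall>j\<in>{1..r}. v j w = ereal (real (\<gamma> j))"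
    using S_elem g unfolding Delta_def by blast
  have "\<forall>i\<in>J2. \<gamma> i = n i" using g unfolding Delta_def by blast
  then have "J1 \<inter> J2 \<subseteq> {1..r}" "\<forall>i\<in>J1 \<inter> J2. v i w = ereal (real (n i))" using J1 w by auto
  then obtain c where c: "c \<in> F" "c \<noteq> 0" "\<forall>i\<in>J1 \<inter> J2. \<not> ereal (real (n i)) < v i (z + c * w)"
    using good_coeff card by blast
  note vals = combination_values[OF J1 J2 b g z(2) w(2) c]
  have xR: "z + c * w \<in> R0" using z w c F_R0 by auto
  have A: "J1 \<union> J2 \<subseteq> {1..r}" using J1 J2 by blast
  obtain \<delta> where "\<delta> \<in> S" "\<forall>j\<in>J1 \<union> J2. \<delta> j = n j" "\<forall>j\<in>{1..r} - (J1 \<union> J2). Suc (n j) \<le> \<delta> j"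
    using realize[OF xR A vals] by blast
  then have "\<delta> \<in> Delta R0 r v (J1 \<union> J2) n" unfolding Delta_def by (auto simp: Suc_le_eq)
  then show ?thesis by blast
qed

lemma Delta_agreement:
  assumes "\<beta> \<in> S" "\<forall>j\<in>{1..r}. n j \<le> \<beta> j"
  shows "\<beta> \<in> Delta R0 r v {j\<in>{1..r}. \<beta> j = n j} n"
  using assms unfolding Delta_def by (auto simp: order_less_le)

end

lemma upclosed_indicator_sum:
  fixes f :: "nat \<Rightarrow> nat"
  assumes f01: "\<forall>j\<in>{a..b}. f j \<in> {0, 1}"
    and up: "\<And>j j'. a \<le> j \<Longrightarrow> j \<le> j' \<Longrightarrow> j' \<le> b \<Longrightarrow> f j = 1 \<Longrightarrow> f j' = 1"
    and t: "a \<le> t" "t \<le> b"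
  shows "f t = 1 \<longleftrightarrow> b + 1 - t \<le> sum f {a..b}"
proof
  assume ft: "f t = 1"
  have "f j = 1" if "j \<in> {t..b}" for j using up[of t j] ft t that by simp
  then have "sum f {t..b} = sum (\<lambda>_. 1) {t..b}" by (rule sum.cong[OF refl])
  then have "b + 1 - t = sum f {t..b}" by simp
  also have "\<dots> \<le> sum f {a..b}" by (rule sum_mono2) (use t in auto)
  finally show "b + 1 - t \<le> sum f {a..b}" .
next
  assume le: "b + 1 - t \<le> sum f {a..b}"
  show "f t = 1"
  proof (rule ccontr)
    assume ft: "f t \<noteq> 1"
    have "f j = 0" if j: "j \<in> {a..t}" for j
    proof -
      have "f j \<in> {0, 1}" using f01 j t by simp
      moreover have "f j \<noteq> 1" using up[of j t] ft j t by auto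
      ultimately show ?thesis by blast
    qed
    then have "sum f {a..t} = 0" by simp
    moreover have "f j \<le> 1" if j: "j \<in> {Suc t..b}" for j
    proof -
      have "j \<in> {a..b}" using j t by simp
      then have "f j \<in> {0, 1}" using f01 by blast
      then show ?thesis by auto
    qed
    then have "sum f {Suc t..b} \<le> b - t" using sum_mono[of "{Suc t..b}" f "\<lambda>_. 1"] by simp
    moreover have "{a..t} \<union> {Suc t..b} = {a..b}" using t by auto
    then have "sum f {a..b} = sum f {a..t} + sum f {Suc t..b}"
      using sum.union_disjoint[of "{a..t}" "{Suc t..b}" f] by simp
    ultimately show False using le t by simp
  qed
qed

locale kind_setting = setting +
  fixes xs n :: "nat \<Rightarrow> nat"
  assumes kind: "of_kind R0 r v xs n"
    and xs01: "\<forall>j\<in>{2..r-1}. xs j \<in> {0, 1}"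
begin

lemma n_in_S: "n \<in> S" and Delta_single: "i \<in> {1..r} \<Longrightarrow> Delta R0 r v {i} n = {}"
  using kind by (simp_all add: of_kind_def maximal_point_def)

lemma kind_Delta:
  assumes j: "j \<in> {2..r-1}" and J: "J \<subset> {1..r}" "card J = j"
  shows "Delta R0 r v J n \<noteq> {} \<longleftrightarrow> xs j = 1"
proof -
  have "\<forall>j\<in>{2..r-1}. (xs j = 0 \<and> (\<forall>J. J \<subset> {1..r} \<and> card J = j \<longrightarrow> Delta R0 r v J n = {}))
      \<or> (xs j = 1 \<and> (\<forall>J. J \<subset> {1..r} \<and> card J = j \<longrightarrow> Delta R0 r v J n \<noteq> {}))"
    using kind unfolding of_kind_def by (rule conjunct2)
  from this j have "(xs j = 0 \<and> (\<forall>J. J \<subset> {1..r} \<and> card J = j \<longrightarrow> Delta R0 r v J n = {}))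
      \<or> (xs j = 1 \<and> (\<forall>J. J \<subset> {1..r} \<and> card J = j \<longrightarrow> Delta R0 r v J n \<noteq> {}))"
    by (rule bspec)
  then show ?thesis
  proof (elim disjE conjE)
    assume "xs j = 0" "\<forall>J. J \<subset> {1..r} \<and> card J = j \<longrightarrow> Delta R0 r v J n = {}"
    then show ?thesis using J by simp
  next
    assume "xs j = 1" "\<forall>J. J \<subset> {1..r} \<and> card J = j \<longrightarrow> Delta R0 r v J n \<noteq> {}"
    then show ?thesis using J by simp
  qed
qed

text \<open>The kind is monotone: \<open>x_j = 1\<close> forces \<open>x_{j+1} = 1\<close>, by combining \<open>\<Delta>_{2..j+1}(n)\<close> and
  \<open>\<Delta>_{1..j}(n)\<close> (this is where \<open>q \<ge> r\<close> enters).\<close>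
lemma kind_Suc:
  assumes j: "2 \<le> j" "Suc j \<le> r - 1" and xj: "xs j = 1"
  shows "xs (Suc j) = 1"
proof -
  have jr: "j \<in> {2..r-1}" using j by simp
  have "{2..Suc j} \<subset> {1..r}" "card {2..Suc j} = j" using j by auto
  then have "Delta R0 r v {2..Suc j} n \<noteq> {}" using kind_Delta[OF jr] xj by blast
  then obtain b where b: "b \<in> Delta R0 r v {2..Suc j} n" by blast
  have "{1..j} \<subset> {1..r}" "card {1..j} = j" using j by auto
  then have "Delta R0 r v {1..j} n \<noteq> {}" using kind_Delta[OF jr] xj by blast
  then obtain g where g: "g \<in> Delta R0 r v {1..j} n" by blast
  have "{2..Suc j} \<inter> {1..j} = {2..j}" by auto
  then have "card ({2..Suc j} \<inter> {1..j}) + 1 < card F" using j card_F by simp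
  then have "Delta R0 r v ({2..Suc j} \<union> {1..j}) n \<noteq> {}"
    by (intro Delta_union[OF _ _ b g]) (use j in auto)
  moreover have "{2..Suc j} \<union> {1..j} = {1..Suc j}" using j by auto
  moreover have "Suc j \<in> {2..r-1}" "{1..Suc j} \<subset> {1..r}" using j by auto
  ultimately show ?thesis using kind_Delta[of "Suc j" "{1..Suc j}"] by simp
qed

lemma kind_mono:
  assumes "2 \<le> j" "j \<le> j'" "j' \<le> r - 1" "xs j = 1"
  shows "xs j' = 1"
  using assms(2,3)
proof (induction j' rule: dec_induct)
  case base
  show ?case using assms(4) .
next
  case (step m)
  then show ?case using kind_Suc[of m] assms(1) by simp
qed

text \<open>It says that \<open>\<ell>\<close> increases when the \<open>k\<close>-th coordinate of \<open>n + e_{1..k-1}\<close> is raised.\<close>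
definition jump :: "nat \<Rightarrow> bool" where
  "jump k \<longleftrightarrow> (\<exists>\<beta>\<in>S. (\<forall>j\<in>{1..r}. j < k \<longrightarrow> n j < \<beta> j) \<and> \<beta> k = n k \<and> (\<forall>j\<in>{1..r}. k < j \<longrightarrow> n j \<le> \<beta> j))"

lemma e_first_Suc:
  assumes k: "1 \<le> k"
  shows "(\<lambda>i. n i + e_first k i) = (\<lambda>i. n i + e_first (k - 1) i)(k := Suc (n k + e_first (k - 1) k))"
  using k by (intro ext) (auto simp: e_first_def)

lemma e_first_pred_self: "1 \<le> k \<Longrightarrow> e_first (k - 1) k = 0"
  by (simp add: e_first_def)

lemma jump_iff_W:
  assumes k: "k \<in> {1..r}"
  shows "(\<exists>z\<in>W (\<lambda>i. n i + e_first (k - 1) i). v k z = ereal (real (n k + e_first (k - 1) k))) \<longleftrightarrow> jump k"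
proof
  assume "\<exists>z\<in>W (\<lambda>i. n i + e_first (k - 1) i). v k z = ereal (real (n k + e_first (k - 1) k))"
  then obtain z where zW: "z \<in> W (\<lambda>i. n i + e_first (k - 1) i)" and zk: "v k z = ereal (real (n k))"
    using e_first_pred_self k by auto
  have "z \<in> R0" "\<forall>j\<in>{1..r}-{k}. ereal (real (n j + e_first (k - 1) j)) \<le> v j z"
    using zW unfolding W_def by blast+
  moreover have "\<forall>j\<in>{k}. v j z = ereal (real (n j))" using zk by simp
  ultimately obtain \<delta> where d: "\<delta> \<in> S" "\<delta> k = n k" "\<forall>j\<in>{1..r}-{k}. n j + e_first (k - 1) j \<le> \<delta> j"
    using realize[of z "{k}" n "\<lambda>j. n j + e_first (k - 1) j"] k by auto
  have "n j < \<delta> j" if j: "j \<in> {1..r}" "j < k" for j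
  proof -
    have "n j + e_first (k - 1) j \<le> \<delta> j" using d(3) j by simp
    moreover have "e_first (k - 1) j = 1" using j by (simp add: e_first_def)
    ultimately show ?thesis by simp
  qed
  moreover have "n j \<le> \<delta> j" if j: "j \<in> {1..r}" "k < j" for j
  proof -
    have "n j + e_first (k - 1) j \<le> \<delta> j" using d(3) j by simp
    then show ?thesis by simp
  qed
  ultimately show "jump k" unfolding jump_def using d(1,2) by blast
next
  assume "jump k"
  then obtain \<beta> where b: "\<beta> \<in> S" "\<forall>j\<in>{1..r}. j < k \<longrightarrow> n j < \<beta> j" "\<beta> k = n k"
    "\<forall>j\<in>{1..r}. k < j \<longrightarrow> n j \<le> \<beta> j" unfolding jump_def by blast
  obtain z where z: "z \<in> R0" "\<forall>j\<in>{1..r}. v j z = ereal (real (\<beta> j))" using S_elem[OF b(1)] by blast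
  have "n j + e_first (k - 1) j \<le> \<beta> j" if j: "j \<in> {1..r}" for j
    using b(2,3,4) j by (cases j k rule: linorder_cases) (auto simp: e_first_def)
  then have "z \<in> W (\<lambda>i. n i + e_first (k - 1) i)" unfolding W_def using z by (simp del: of_nat_add)
  moreover have "v k z = ereal (real (n k + e_first (k - 1) k))" using z k b(3) e_first_pred_self by simp
  ultimately show "\<exists>z\<in>W (\<lambda>i. n i + e_first (k - 1) i). v k z = ereal (real (n k + e_first (k - 1) k))"
    by blast
qed

lemma ell_e_first: "h \<le> r \<Longrightarrow> ell R0 F r v (\<lambda>i. n i + e_first h i) = ell R0 F r v n + card {k\<in>{1..h}. jump k}"
proof (induction h)
  case 0
  have "(\<lambda>i. n i + e_first 0 i) = n" by (auto simp: e_first_def)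
  then show ?case by simp
next
  case (Suc h)
  have k: "Suc h \<in> {1..r}" using Suc.prems by simp
  have "ell R0 F r v (\<lambda>i. n i + e_first (Suc h) i)
      = ell R0 F r v (\<lambda>i. n i + e_first h i) + (if jump (Suc h) then 1 else 0)"
    unfolding ell_W e_first_Suc[of "Suc h", simplified]
    using quot_dim_W_Suc[OF k, of "\<lambda>i. n i + e_first h i"] jump_iff_W[OF k] by simp
  moreover have "{k\<in>{1..Suc h}. jump k} = {k\<in>{1..h}. jump k} \<union> (if jump (Suc h) then {Suc h} else {})"
    by (auto simp: le_Suc_eq)
  then have "card {k\<in>{1..Suc h}. jump k} = card {k\<in>{1..h}. jump k} + (if jump (Suc h) then 1 else 0)"
    by auto
  ultimately show ?case using Suc by simp
qed

lemma jump_1: "jump 1"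
  unfolding jump_def using n_in_S by auto

text \<open>For \<open>k \<ge> 2\<close> a jump at \<open>k\<close> is a non-empty \<open>\<Delta>_J(n)\<close> with \<open>k = min J\<close>; maximality forces
  \<open>\<sharp>J \<ge> 2\<close>, and by monotonicity of the kind this happens iff \<open>x_{r+1-k} = 1\<close>.\<close>
lemma jump_ge2:
  assumes k: "2 \<le> k" "k \<le> r"
  shows "jump k \<longleftrightarrow> k \<le> r - 1 \<and> xs (r + 1 - k) = 1"
proof
  assume "jump k"
  then obtain \<beta> where b: "\<beta> \<in> S" "\<forall>j\<in>{1..r}. j < k \<longrightarrow> n j < \<beta> j" "\<beta> k = n k"
    "\<forall>j\<in>{1..r}. k < j \<longrightarrow> n j \<le> \<beta> j" unfolding jump_def by blast
  define J where "J = {j\<in>{1..r}. \<beta> j = n j}"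
  have "\<forall>j\<in>{1..r}. n j \<le> \<beta> j" using b by (metis less_imp_le_nat linorder_neqE_nat order_refl)
  then have bD: "\<beta> \<in> Delta R0 r v J n" unfolding J_def by (rule Delta_agreement[OF b(1)])
  have kJ: "k \<in> J" unfolding J_def using k b by auto
  have Jsub: "J \<subseteq> {k..r}" unfolding J_def using b(2) by (auto simp: not_less)
  then have Jpsub: "J \<subset> {1..r}" and cle: "card J \<le> r + 1 - k" using k card_mono[OF _ Jsub] by auto
  have "card J \<noteq> 1"
  proof
    assume "card J = 1"
    then have "J = {k}" using kJ by (metis card_1_singletonE singletonD)
    then show False using bD Delta_single k by auto
  qed
  moreover have "card J \<noteq> 0" using kJ finite_subset[OF Jsub] by auto
  ultimately have c2: "2 \<le> card J" by simp
  have "xs (card J) = 1" using kind_Delta[of "card J" J] c2 cle k Jpsub bD by auto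
  then show "k \<le> r - 1 \<and> xs (r + 1 - k) = 1" using kind_mono[of "card J" "r + 1 - k"] c2 cle k by simp
next
  assume h: "k \<le> r - 1 \<and> xs (r + 1 - k) = 1"
  have "r + 1 - k \<in> {2..r-1}" "{k..r} \<subset> {1..r}" "card {k..r} = r + 1 - k" using h k by auto
  then have "Delta R0 r v {k..r} n \<noteq> {}" using kind_Delta h by blast
  then obtain \<beta> where "\<beta> \<in> S" "\<forall>i\<in>{k..r}. \<beta> i = n i" "\<forall>t\<in>{1..r}-{k..r}. n t < \<beta> t"
    unfolding Delta_def by blast
  then show "jump k" unfolding jump_def using k by (intro bexI[of _ \<beta>]) auto
qed

lemma jump_iff:
  assumes k: "k \<in> {1..r}"
  shows "jump k \<longleftrightarrow> k \<le> sum xs {2..r-1} + 1"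
proof (cases "k = 1")
  case True
  then show ?thesis using jump_1 by simp
next
  case False
  then have k2: "2 \<le> k" "k \<le> r" using k by auto
  show ?thesis
  proof (cases "k \<le> r - 1")
    case True
    have "xs (r + 1 - k) = 1 \<longleftrightarrow> r - 1 + 1 - (r + 1 - k) \<le> sum xs {2..r-1}"
      by (rule upclosed_indicator_sum[OF xs01 kind_mono]) (use k2 True in auto)
    then show ?thesis using jump_ge2[OF k2] True k2 by auto
  next
    case False
    have "xs j \<le> 1" if "j \<in> {2..r-1}" for j using xs01 that by fastforce
    then have "sum xs {2..r-1} \<le> sum (\<lambda>_. 1) {2..r-1}" by (intro sum_mono)
    then show ?thesis using jump_ge2[OF k2] False k2 by auto
  qed
qed

lemma dh_formula:
  assumes h: "h \<in> {1..r}"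
  shows "dh R0 F r v h n = (if h \<le> sum xs {2..r-1} + 1 then int h else int (sum xs {2..r-1} + 1))"
proof -
  have "{k\<in>{1..h}. jump k} = {1..min h (sum xs {2..r-1} + 1)}" using jump_iff h by auto
  then show ?thesis unfolding dh_def using ell_e_first[of h] h by auto
qed

end

text \<open>The main theorem.  For \<open>r \<le> 1\<close> there is no maximal point at all (\<open>n \<in> \<Delta>_1(n)\<close>), so the
  statement is vacuous; otherwise it is \<open>dh_formula\<close>.\<close>
theorem mainTheorem3:
  fixes R0 F :: "'a::comm_ring_1 set"
    and v :: "nat \<Rightarrow> 'a \<Rightarrow> ereal"
    and r q :: nat
    and xs n :: "nat \<Rightarrow> nat"
  assumes O_CM: "one_dim_CM_local R0"
    and K_frac: "total_ring_of_fractions R0"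
    and coeff: "coefficient_field R0 F"
    and F_card: "finite F" "card F = q"
    and q_ge: "r \<le> q"
    and Ob_finite: "finite_over R0 (int_closure R0)"
    and vals: "\<forall>i\<in>{1..r}. discrete_valuation (v i)"
    and Ob_inter: "int_closure R0 = (\<Inter>i\<in>{1..r}. val_ring (v i))"
    and distinct_max: "\<forall>i\<in>{1..r}. \<forall>j\<in>{1..r}. i \<noteq> j \<longrightarrow>
                          val_max (int_closure R0) (v i) \<noteq> val_max (int_closure R0) (v j)"
    and res_deg1: "\<forall>i\<in>{1..r}. \<forall>z\<in>int_closure R0. \<exists>c\<in>F. z - c \<in> val_max (int_closure R0) (v i)"
    and xs01: "\<forall>j\<in>{2..r-1}. xs j \<in> {0, 1}"
    and kind: "of_kind R0 r v xs n"
  shows "\<forall>h\<in>{1..r}. dh R0 F r v h n =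
           (if h \<le> (\<Sum>j=2..r-1. xs j) + 1 then int h else int ((\<Sum>j=2..r-1. xs j) + 1))"
proof (cases "2 \<le> r")
  case True
  have "kind_setting R0 F v r xs n"
    unfolding kind_setting_def kind_setting_axioms_def setting_def
    using O_CM K_frac coeff F_card q_ge Ob_finite vals Ob_inter distinct_max res_deg1 True kind xs01
    by simp
  then show ?thesis using kind_setting.dh_formula by blast
next
  case False
  show ?thesis
  proof (cases "r = 1")
    case True
    have "n \<in> value_semigroup R0 r v" "Delta R0 r v {1} n = {}"
      using kind True by (auto simp: of_kind_def maximal_point_def)
    moreover have "n \<in> Delta R0 r v {1} n" using calculation(1) True by (simp add: Delta_def)
    ultimately show ?thesis by simp
  qed (use False in simp)
qed
end
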